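(* In the Byblos protocol described in the context, if two correct servers both apply to their logs two conflicting, non-cancelled transactions $T_1$ and $T_2$, then they apply them in the same order.
   Context: Byblos protocol. There are $n=4f+1$ servers, at most $f$ Byzantine, the rest correct. Clients are not Byzantine (may crash). Messages between correct parties are eventually delivered, FIFO, authenticated; client messages are signed and unforgeable. Each transaction declares a read set and a write set of keys of a key-value store; two transactions conflict if the write set of one intersects the read or write set of the other. A fixed total order $<$ on transactions (by hash of identifier) is used for tie-breaking. Each correct server keeps: integer $\mathit{clock}$ (initially $0$); sets $\mathit{proposed}[s]$ of pairs $(T,k)$ per server $s$; maps $\mathit{confirmed}[t]$, $\mathit{pending}[t]$ (initially empty); sets $\mathit{committed}$, $\mathit{cancelled}$, $\mathit{resolving}$, $\mathit{ConfirmWitness}[T]$, $\mathit{CancelWitness}[T]$; a $\mathit{log}$; a ledger state; timers $\mathit{timer}[t]$; a timeout constant $\delta$. Client with transaction $T$: broadcasts $\mathrm{Propose}(T)$; waits for $\mathrm{ProposeAck}(T,\cdot)$ from at least $n-f$ servers; sets $\hat t$ to $1$ plus the $(f+1)$-st largest received value (missing values count as $0$); broadcasts $\mathrm{Confirm}(T,\hat t)$; waits for $f+1$ identical $\mathrm{ResolveAck}(T,\mathit{code},\mathit{result})$ and returns $\mathit{result}$ if $\mathit{code}=\mathrm{COMMIT}$, else $\bot$. Correct server: (i) on $\mathrm{Propose}(T)$ from a client, adds $(T,\mathit{clock})$ to $\mathit{proposed}[\mathit{self}]$, sends $\mathrm{Proposed}(T,\mathit{clock})$ to all servers and $\mathrm{ProposeAck}(T,\mathit{clock})$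 to the client; (ii) on $\mathrm{Proposed}(T,k)$ from server $s$, adds $(T,k)$ to $\mathit{proposed}[s]$; (iii) on $\mathrm{Confirm}(T,\hat t)$ from a client or server $s$: $\mathit{clock}:=\max(\mathit{clock},\hat t)$, adds $T$ to $\mathit{confirmed}[\hat t]$, forwards the Confirm to all servers once, adds $s$ to $\mathit{ConfirmWitness}[T]$; if $\mathit{pending}[\hat t]=\emptyset$ and $|\mathit{ConfirmWitness}[T]|=n-f$, sets $\mathit{pending}[\hat t]$ to the set of $T'$ with $(T',k)\in\mathit{proposed}[s']$ for some $s'\in\mathit{ConfirmWitness}[T]$, $k\le\hat t$, and sets $\mathit{timer}[\hat t]$ to expire after $\delta$; if $T\notin\mathit{resolving}$, adds it and starts a resolution of $T$ with input COMMIT; (iv) on $\mathrm{StartResolution}(T,\mathit{code})$ from server $s$ with $T\notin\mathit{resolving}$: if COMMIT, adds $T$ to $\mathit{resolving}$ and starts a resolution with input COMMIT; if CANCEL, adds $s$ to $\mathit{CancelWitness}[T]$ and once it has $\ge f+1$ members, adds $T$ to $\mathit{resolving}$ and starts a resolution with input CANCEL; (v) when $\mathit{timer}[t]$ expires, starts a resolution with input CANCEL for each $T'\in\mathit{pending}[t]$ not in $\mathit{resolving}$ (adding it). A resolution of $T$ sends $\mathrm{StartResolution}(T,\mathit{code})$ to all servers and runs a binary Byzantine consensus instance for $T$ (input $1$ for COMMIT, $0$ for CANCEL) satisfying agreement and validity, and terminating in periods of synchrony; decision $1$ adds $T$ to $\mathit{committed}$, decision $0$ to $\mathit{cancelled}$.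 Apply rule: $\mathrm{OrderBefore}(T,T')$ holds iff $T\in\mathit{confirmed}[t]$ and either $T'\in\mathit{confirmed}[t']$ with $t<t'$, or $T'\in\mathit{confirmed}[t]$ and $T<T'$. The server appends $T$ to its log, applies it to the state, and sends $\mathrm{ResolveAck}(T,\mathrm{COMMIT},\mathit{result})$ to its client when $T\in\mathit{committed}\cap\mathit{confirmed}[t]$, $\mathit{pending}[t]\neq\emptyset$, and every $T'\in\mathit{pending}[t]$ either does not conflict with $T$, is in $\mathit{cancelled}$, is in the log, or satisfies $\mathrm{OrderBefore}(T,T')$. A transaction in $\mathit{cancelled}$ not in the log is appended (without being applied) and $\mathrm{ResolveAck}(T,\mathrm{CANCEL},\bot)$ is sent. *)

theory Defs
  imports Main "HOL-Library.Multiset"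
begin

text \<open>Transactions have type 'tx, ordered by a fixed total order (the hash order);
servers have a finite type 's (n = card (UNIV :: 's set)); keys have type 'k.\<close>

definition conflict :: "('tx \<Rightarrow> 'k set) \<Rightarrow> ('tx \<Rightarrow> 'k set) \<Rightarrow> 'tx \<Rightarrow> 'tx \<Rightarrow> bool" where
  "conflict rs ws T T' \<longleftrightarrow> T \<noteq> T' \<and>
     (ws T \<inter> (rs T' \<union> ws T') \<noteq> {} \<or> ws T' \<inter> (rs T \<union> ws T) \<noteq> {})"

datatype code = COMMIT | CANCEL

datatype 'tx msg =
    Propose 'tx
  | ProposeAck 'tx nat
  | Proposed 'tx nat
  | Confirm 'tx nat
  | StartResolution 'tx code

text \<open>Network nodes: servers, and the (non-Byzantine, possibly crashing) client
issuing a given transaction.\<close>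
datatype ('s, 'tx) node = Srv 's | Cli 'tx

record ('s, 'tx) sstate =
  clock :: nat
  proposed :: "'s \<Rightarrow> ('tx \<times> nat) set"
  confirmed :: "nat \<Rightarrow> 'tx set"
  pending :: "nat \<Rightarrow> 'tx set"
  committed :: "'tx set"
  cancelled :: "'tx set"
  resolving :: "'tx set"
  ConfirmWitness :: "'tx \<Rightarrow> 's set"
  CancelWitness :: "'tx \<Rightarrow> 's set"
  forwarded :: "('tx \<times> nat) set"
  log :: "('tx \<times> bool) list"   \<comment> \<open>True: applied (committed); False: appended as cancelled\<close>
  timers :: "nat set"           \<comment> \<open>timestamps t whose timer[t] is armed and not yet expired\<close>

definition sinit :: "('s, 'tx) sstate" where
  "sinit = \<lparr> clock = 0, proposed = (\<lambda>_. {}), confirmed = (\<lambda>_. {}), pending = (\<lambda>_. {}),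
     committed = {}, cancelled = {}, resolving = {}, ConfirmWitness = (\<lambda>_. {}),
     CancelWitness = (\<lambda>_. {}), forwarded = {}, log = [], timers = {} \<rparr>"

datatype 's cphase = CIdle | CWait "'s \<Rightarrow> nat option" | CDone | CCrashed

type_synonym ('s, 'tx) outs = "('s, 'tx) node \<Rightarrow> 'tx msg list"

definition no_out :: "('s, 'tx) outs" where "no_out = (\<lambda>_. [])"

definition to_servers :: "'tx msg list \<Rightarrow> ('s, 'tx) outs" where
  "to_servers ms = (\<lambda>d. case d of Srv _ \<Rightarrow> ms | Cli _ \<Rightarrow> [])"

text \<open>Handlers of a correct server. They return the new local state, the messages sent
(per destination, in order), and the consensus inputs started (resolutions).\<close>

definition on_propose :: "'s \<Rightarrow> ('s, 'tx) node \<Rightarrow> 'tx \<Rightarrow> ('s, 'tx) sstate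
    \<Rightarrow> ('s, 'tx) sstate \<times> ('s, 'tx) outs \<times> ('tx \<times> code) list" where
  "on_propose self x T st =
    (st\<lparr>proposed := (proposed st)(self := insert (T, clock st) (proposed st self))\<rparr>,
     (\<lambda>d. if d = x then [ProposeAck T (clock st)]
          else case d of Srv _ \<Rightarrow> [Proposed T (clock st)] | Cli _ \<Rightarrow> []),
     [])"

definition on_proposed :: "'s \<Rightarrow> 'tx \<Rightarrow> nat \<Rightarrow> ('s, 'tx) sstate
    \<Rightarrow> ('s, 'tx) sstate \<times> ('s, 'tx) outs \<times> ('tx \<times> code) list" where
  "on_proposed s' T k st =
    (st\<lparr>proposed := (proposed st)(s' := insert (T, k) (proposed st s'))\<rparr>, no_out, [])"

text \<open>q is the quorum size n - f.\<close>
definition on_confirm :: "nat \<Rightarrow> ('s, 'tx) node \<Rightarrow> 'tx \<Rightarrow> nat \<Rightarrow> ('s, 'tx) sstate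
    \<Rightarrow> ('s, 'tx) sstate \<times> ('s, 'tx) outs \<times> ('tx \<times> code) list" where
  "on_confirm q x T t st =
    (let st1 = st\<lparr>clock := max (clock st) t,
                  confirmed := (confirmed st)(t := insert T (confirmed st t))\<rparr>;
         fwd = (if (T, t) \<in> forwarded st1 then [] else [Confirm T t]);
         st2 = st1\<lparr>forwarded := insert (T, t) (forwarded st1)\<rparr>;
         st3 = (case x of
                  Srv s' \<Rightarrow> st2\<lparr>ConfirmWitness := (ConfirmWitness st2)(T := insert s' (ConfirmWitness st2 T))\<rparr>
                | Cli _ \<Rightarrow> st2);
         st4 = (if pending st3 t = {} \<and> card (ConfirmWitness st3 T) = q
                then st3\<lparr>pending := (pending st3)(t :=
                          {T'. \<exists>s'\<in>ConfirmWitness st3 T. \<exists>k\<le>t. (T', k) \<in> proposed st3 s'}),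
                         timers := insert t (timers st3)\<rparr>
                else st3)
     in if T \<in> resolving st4
        then (st4, to_servers fwd, [])
        else (st4\<lparr>resolving := insert T (resolving st4)\<rparr>,
              to_servers (fwd @ [StartResolution T COMMIT]), [(T, COMMIT)]))"

definition on_startres :: "nat \<Rightarrow> 's \<Rightarrow> 'tx \<Rightarrow> code \<Rightarrow> ('s, 'tx) sstate
    \<Rightarrow> ('s, 'tx) sstate \<times> ('s, 'tx) outs \<times> ('tx \<times> code) list" where
  "on_startres f s' T c st =
    (if T \<in> resolving st then (st, no_out, [])
     else (case c of
       COMMIT \<Rightarrow> (st\<lparr>resolving := insert T (resolving st)\<rparr>,
                  to_servers [StartResolution T COMMIT], [(T, COMMIT)])
     | CANCEL \<Rightarrow>
         (let st1 = st\<lparr>CancelWitness := (CancelWitness st)(T := insert s' (CancelWitness st T))\<rparr>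
          in if card (CancelWitness st1 T) \<ge> f + 1
             then (st1\<lparr>resolving := insert T (resolving st1)\<rparr>,
                   to_servers [StartResolution T CANCEL], [(T, CANCEL)])
             else (st1, no_out, []))))"

definition handle :: "nat \<Rightarrow> nat \<Rightarrow> 's \<Rightarrow> ('s, 'tx) node \<Rightarrow> 'tx msg \<Rightarrow> ('s, 'tx) sstate
    \<Rightarrow> ('s, 'tx) sstate \<times> ('s, 'tx) outs \<times> ('tx \<times> code) list" where
  "handle f q self x m st =
    (case m of
       Propose T \<Rightarrow> (case x of Cli _ \<Rightarrow> on_propose self x T st | Srv _ \<Rightarrow> (st, no_out, []))
     | Proposed T k \<Rightarrow> (case x of Srv s' \<Rightarrow> on_proposed s' T k st | Cli _ \<Rightarrow> (st, no_out, []))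
     | Confirm T t \<Rightarrow> on_confirm q x T t st
     | StartResolution T c \<Rightarrow> (case x of Srv s' \<Rightarrow> on_startres f s' T c st | Cli _ \<Rightarrow> (st, no_out, []))
     | ProposeAck _ _ \<Rightarrow> (st, no_out, []))"

definition order_before :: "('s, 'tx::linorder) sstate \<Rightarrow> 'tx \<Rightarrow> 'tx \<Rightarrow> bool" where
  "order_before st T T' \<longleftrightarrow> (\<exists>t. T \<in> confirmed st t \<and>
      ((\<exists>t'. T' \<in> confirmed st t' \<and> t < t') \<or> (T' \<in> confirmed st t \<and> T < T')))"

text \<open>The (f+1)-st largest of the values v s over all n servers (missing values given as 0).\<close>
definition kth_largest :: "nat \<Rightarrow> ('s::finite \<Rightarrow> nat) \<Rightarrow> nat" where
  "kth_largest f v = rev (sorted_list_of_multiset (image_mset v (mset_set (UNIV :: 's set)))) ! f"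

record ('s, 'tx) gstate =
  srv :: "'s \<Rightarrow> ('s, 'tx) sstate"
  cli :: "'tx \<Rightarrow> 's cphase"
  chan :: "('s, 'tx) node \<Rightarrow> ('s, 'tx) node \<Rightarrow> 'tx msg list"  \<comment> \<open>FIFO channel from sender to receiver\<close>
  cinput :: "'tx \<Rightarrow> code set"        \<comment> \<open>inputs of correct servers to the consensus instance for T\<close>
  decision :: "'tx \<Rightarrow> code option"    \<comment> \<open>value decided by the consensus instance for T\<close>
  signed :: "('tx \<times> nat) set"        \<comment> \<open>Confirm(T,t) messages signed by clients\<close>

definition ginit :: "('s, 'tx) gstate" where
  "ginit = \<lparr> srv = (\<lambda>_. sinit), cli = (\<lambda>_. CIdle), chan = (\<lambda>_ _. []),
            cinput = (\<lambda>_. {}), decision = (\<lambda>_. None), signed = {} \<rparr>"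

definition srv_step :: "('s, 'tx) gstate \<Rightarrow> 's \<Rightarrow> ('s, 'tx) sstate \<Rightarrow> ('s, 'tx) outs
     \<Rightarrow> ('tx \<times> code) list \<Rightarrow> ('s, 'tx) node \<Rightarrow> 'tx msg list \<Rightarrow> ('s, 'tx) gstate" where
  "srv_step g s st' outs ins x rest =
    (let c1 = (chan g)(x := (chan g x)(Srv s := rest))
     in g\<lparr>srv := (srv g)(s := st'),
          chan := c1(Srv s := (\<lambda>y. c1 (Srv s) y @ outs y)),
          cinput := (\<lambda>T. cinput g T \<union> {c. (T, c) \<in> set ins})\<rparr>)"

definition client_send :: "('s, 'tx) gstate \<Rightarrow> 'tx \<Rightarrow> 's set \<Rightarrow> 'tx msg
     \<Rightarrow> ('s, 'tx) node \<Rightarrow> ('s, 'tx) node \<Rightarrow> 'tx msg list" where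
  "client_send g T S m =
    (chan g)(Cli T := (\<lambda>y. case y of Srv d \<Rightarrow> if d \<in> S then chan g (Cli T) y @ [m] else chan g (Cli T) y
                                  | Cli _ \<Rightarrow> chan g (Cli T) y))"

inductive step :: "nat \<Rightarrow> 's::finite set \<Rightarrow> ('tx::linorder \<Rightarrow> 'k set) \<Rightarrow> ('tx \<Rightarrow> 'k set)
    \<Rightarrow> ('s, 'tx) gstate \<Rightarrow> ('s, 'tx) gstate \<Rightarrow> bool"
  for f Byz rs ws where
  recv: "\<lbrakk> s \<notin> Byz; chan g x (Srv s) = m # rest;
           handle f (card (UNIV :: 's set) - f) s x m (srv g s) = (st', outs, ins) \<rbrakk>
         \<Longrightarrow> step f Byz rs ws g (srv_step g s st' outs ins x rest)"
  \<comment> \<open>expiry of timer[t] (asynchrony: at an arbitrary moment after it was set)\<close>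
| timer: "\<lbrakk> s \<notin> Byz; t \<in> timers (srv g s); distinct ts;
            set ts = pending (srv g s) t - resolving (srv g s) \<rbrakk>
         \<Longrightarrow> step f Byz rs ws g
               (g\<lparr>srv := (srv g)(s := (srv g s)\<lparr>timers := timers (srv g s) - {t},
                                              resolving := resolving (srv g s) \<union> set ts\<rparr>),
                  chan := (chan g)(Srv s := (\<lambda>y. chan g (Srv s) y @
                              to_servers (map (\<lambda>T. StartResolution T CANCEL) ts) y)),
                  cinput := (\<lambda>T. if T \<in> set ts then insert CANCEL (cinput g T) else cinput g T)\<rparr>)"
  \<comment> \<open>a correct server decides in the binary consensus instance for T
      (agreement: single decision value; validity: the value was input by a correct server)\<close>
| decide: "\<lbrakk> s \<notin> Byz; T \<in> resolving (srv g s); T \<notin> committed (srv g s); T \<notin> cancelled (srv g s);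
             c \<in> cinput g T; decision g T = None \<or> decision g T = Some c \<rbrakk>
         \<Longrightarrow> step f Byz rs ws g
               (g\<lparr>srv := (srv g)(s := (if c = COMMIT
                     then (srv g s)\<lparr>committed := insert T (committed (srv g s))\<rparr>
                     else (srv g s)\<lparr>cancelled := insert T (cancelled (srv g s))\<rparr>)),
                  decision := (decision g)(T := Some c)\<rparr>)"
| apply_tx: "\<lbrakk> s \<notin> Byz; T \<in> committed (srv g s); T \<in> confirmed (srv g s) t;
              T \<notin> fst ` set (log (srv g s)); pending (srv g s) t \<noteq> {};
              \<forall>T' \<in> pending (srv g s) t. \<not> conflict rs ws T T' \<or> T' \<in> cancelled (srv g s)
                   \<or> T' \<in> fst ` set (log (srv g s)) \<or> order_before (srv g s) T T' \<rbrakk>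
         \<Longrightarrow> step f Byz rs ws g
               (g\<lparr>srv := (srv g)(s := (srv g s)\<lparr>log := log (srv g s) @ [(T, True)]\<rparr>)\<rparr>)"
| cancel_tx: "\<lbrakk> s \<notin> Byz; T \<in> cancelled (srv g s); T \<notin> fst ` set (log (srv g s)) \<rbrakk>
         \<Longrightarrow> step f Byz rs ws g
               (g\<lparr>srv := (srv g)(s := (srv g s)\<lparr>log := log (srv g s) @ [(T, False)]\<rparr>)\<rparr>)"
  \<comment> \<open>a Byzantine server sends an arbitrary message, but cannot forge client signatures\<close>
| byz: "\<lbrakk> b \<in> Byz; \<forall>T t. m = Confirm T t \<longrightarrow> (T, t) \<in> signed g \<rbrakk>
         \<Longrightarrow> step f Byz rs ws g
               (g\<lparr>chan := (chan g)(Srv b := (chan g (Srv b))(y := chan g (Srv b) y @ [m]))\<rparr>)"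
  \<comment> \<open>client of T broadcasts Propose(T); if it crashes during the broadcast only a subset S receives it\<close>
| cli_propose: "\<lbrakk> cli g T = CIdle \<rbrakk>
         \<Longrightarrow> step f Byz rs ws g
               (g\<lparr>chan := client_send g T S (Propose T),
                  cli := (cli g)(T := (if S = UNIV then CWait (\<lambda>_. None) else CCrashed))\<rparr>)"
| cli_recv: "\<lbrakk> chan g x (Cli T) = m # rest;
               ph' = (case (cli g T, m, x) of
                        (CWait acks, ProposeAck T' k, Srv s) \<Rightarrow>
                           if T' = T \<and> acks s = None then CWait (acks(s := Some k)) else CWait acks
                      | (ph, _, _) \<Rightarrow> ph) \<rbrakk>
         \<Longrightarrow> step f Byz rs ws g
               (g\<lparr>chan := (chan g)(x := (chan g x)(Cli T := rest)),
                  cli := (cli g)(T := ph')\<rparr>)"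
| cli_confirm: "\<lbrakk> cli g T = CWait acks; card {s. acks s \<noteq> None} \<ge> card (UNIV :: 's set) - f;
                  th = 1 + kth_largest f (\<lambda>s. case acks s of None \<Rightarrow> 0 | Some k \<Rightarrow> k) \<rbrakk>
         \<Longrightarrow> step f Byz rs ws g
               (g\<lparr>chan := client_send g T S (Confirm T th),
                  cli := (cli g)(T := (if S = UNIV then CDone else CCrashed)),
                  signed := insert (T, th) (signed g)\<rparr>)"
| cli_crash: "step f Byz rs ws g (g\<lparr>cli := (cli g)(T := CCrashed)\<rparr>)"

inductive_set reach :: "nat \<Rightarrow> 's::finite set \<Rightarrow> ('tx::linorder \<Rightarrow> 'k set) \<Rightarrow> ('tx \<Rightarrow> 'k set)
    \<Rightarrow> ('s, 'tx) gstate set"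
  for f Byz rs ws where
  init: "ginit \<in> reach f Byz rs ws"
| step: "\<lbrakk> g \<in> reach f Byz rs ws; step f Byz rs ws g g' \<rbrakk> \<Longrightarrow> g' \<in> reach f Byz rs ws"

definition applied :: "('tx \<times> bool) list \<Rightarrow> 'tx \<Rightarrow> bool" where
  "applied L T \<longleftrightarrow> (T, True) \<in> set L"

definition applied_before :: "('tx \<times> bool) list \<Rightarrow> 'tx \<Rightarrow> 'tx \<Rightarrow> bool" where
  "applied_before L T1 T2 \<longleftrightarrow>
     (\<exists>i j. i < j \<and> j < length L \<and> L ! i = (T1, True) \<and> L ! j = (T2, True))"

end

theory Submission
  imports Defs "HOL-Library.Product_Lexorder"
begin

text \<open>A client signs a single timestamp for its transaction, and every correct server applies
  conflicting, non-cancelled transactions in the lexicographic order of (signed timestamp, hash),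
  which is therefore the same at all correct servers. When a server applies T1, confirmed with
  timestamp t1, the apply rule requires every conflicting T2 in pending[t1] that is neither logged
  nor cancelled to come later in this order. A conflicting T2 missing from pending[t1] was not
  proposed below t1 by any correct server of the quorum W behind pending[t1] (FIFO channels
  deliver those proposals before the Confirm that makes a server a witness), and the clocks of
  these servers have reached t1, so their later proposals of T2 are at least t1 as well. The
  signed timestamp of T2 is one more than the (f+1)-st largest of n - f acknowledgements, and for
  n = 4f + 1 at least f + 1 of these come from correct members of W, so it exceeds t1.\<close>

section \<open>Quorum arithmetic\<close>

lemma sorted_desc_nth_ge:
  fixes xs :: "nat list"
  assumes "sorted_wrt (\<ge>) xs" and "Suc f \<le> length (filter (\<lambda>x. t \<le> x) xs)"
  shows "f < length xs \<and> t \<le> xs ! f"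
proof (rule ccontr)
  assume "\<not> (f < length xs \<and> t \<le> xs ! f)"
  then have small: "x < t" if "x \<in> set (drop f xs)" for x
  proof -
    obtain j where j: "f + j < length xs" "x = xs ! (f + j)"
      using \<open>x \<in> set (drop f xs)\<close> by (force simp: in_set_conv_nth less_diff_conv add.commute)
    then have "x \<le> xs ! f"
      using assms(1) by (cases j) (auto simp: sorted_wrt_iff_nth_less)
    then show ?thesis using \<open>\<not> (f < length xs \<and> t \<le> xs ! f)\<close> j(1) by auto
  qed
  have "filter (\<lambda>x. t \<le> x) xs = filter (\<lambda>x. t \<le> x) (take f xs)"
    using small by (metis append_Nil2 append_take_drop_id filter_False filter_append not_le)
  then have "length (filter (\<lambda>x. t \<le> x) xs) \<le> f"
    by (metis length_filter_le length_take min.bounded_iff nat_le_linear)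
  then show False using assms(2) by simp
qed

lemma kth_largest_ge:
  fixes v :: "'s::finite \<Rightarrow> nat"
  assumes "Suc f \<le> card {s. t \<le> v s}"
  shows "t \<le> kth_largest f v"
proof -
  let ?M = "image_mset v (mset_set (UNIV :: 's set))"
  let ?xs = "rev (sorted_list_of_multiset ?M)"
  have "length (filter (\<lambda>x. t \<le> x) ?xs) = size (filter_mset (\<lambda>x. t \<le> x) ?M)"
    by (metis mset_filter mset_rev mset_sorted_list_of_multiset size_mset)
  also have "\<dots> = card {s. t \<le> v s}"
    by (simp add: filter_mset_image_mset)
  finally show ?thesis
    using sorted_desc_nth_ge[of ?xs f t] assms unfolding kth_largest_def by (simp add: sorted_wrt_rev)
qed

lemma quorum_intersection:
  fixes W A Byz :: "'s::finite set"
  assumes "card (UNIV :: 's set) - f \<le> card W" and "card (UNIV :: 's set) - f \<le> card A"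
    and "card Byz \<le> f"
  shows "card (UNIV :: 's set) - 3 * f \<le> card (W \<inter> A - Byz)"
proof -
  have "card (W \<union> A) \<le> card (UNIV :: 's set)" by (rule card_mono) simp_all
  moreover have "card W + card A = card (W \<union> A) + card (W \<inter> A)" by (rule card_Un_Int) simp_all
  moreover have "card (W \<inter> A) - card Byz \<le> card (W \<inter> A - Byz)" by (rule diff_card_le_card_Diff) simp
  ultimately show ?thesis using assms by linarith
qed

section \<open>Invariants\<close>

definition client_timestamp :: "nat \<Rightarrow> ('s::finite \<Rightarrow> nat option) \<Rightarrow> nat" where
  "client_timestamp f acks = 1 + kth_largest f (\<lambda>s. case acks s of None \<Rightarrow> 0 | Some k \<Rightarrow> k)"

definition acks_genuine :: "'s set \<Rightarrow> ('s, 'tx) gstate \<Rightarrow> 'tx \<Rightarrow> ('s \<Rightarrow> nat option) \<Rightarrow> bool" where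
  "acks_genuine Byz g T acks \<longleftrightarrow>
     (\<forall>s k. s \<notin> Byz \<longrightarrow> acks s = Some k \<longrightarrow> (T, k) \<in> proposed (srv g s) s)"

definition proposal_msg_genuine :: "('s, 'tx) gstate \<Rightarrow> 's \<Rightarrow> 'tx msg \<Rightarrow> bool" where
  "proposal_msg_genuine g s m \<longleftrightarrow>
     (\<forall>T k. m = ProposeAck T k \<or> m = Proposed T k \<longrightarrow> (T, k) \<in> proposed (srv g s) s)"

definition client_inv :: "nat \<Rightarrow> 's::finite set \<Rightarrow> ('s, 'tx) gstate \<Rightarrow> bool" where
  "client_inv f Byz g \<longleftrightarrow>
    (\<forall>T t t'. (T, t) \<in> signed g \<longrightarrow> (T, t') \<in> signed g \<longrightarrow> t = t') \<and>
    (\<forall>T t. (T, t) \<in> signed g \<longrightarrow> cli g T = CDone \<or> cli g T = CCrashed) \<and>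
    (\<forall>T t. (T, t) \<in> signed g \<longrightarrow> (\<exists>acks. card (UNIV :: 's set) - f \<le> card {s. acks s \<noteq> None} \<and>
        t = client_timestamp f acks \<and> acks_genuine Byz g T acks)) \<and>
    (\<forall>T acks. cli g T = CWait acks \<longrightarrow> acks_genuine Byz g T acks) \<and>
    (\<forall>s d m. s \<notin> Byz \<longrightarrow> m \<in> set (chan g (Srv s) d) \<longrightarrow> proposal_msg_genuine g s m)"

definition confirm_inv :: "'s set \<Rightarrow> ('s, 'tx) gstate \<Rightarrow> bool" where
  "confirm_inv Byz g \<longleftrightarrow>
    (\<forall>x y T t. Confirm T t \<in> set (chan g x y) \<longrightarrow> (T, t) \<in> signed g) \<and>
    (\<forall>s T t. s \<notin> Byz \<longrightarrow> T \<in> confirmed (srv g s) t \<longrightarrow> (T, t) \<in> signed g) \<and>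
    (\<forall>s T t. s \<notin> Byz \<longrightarrow> (T, t) \<in> forwarded (srv g s) \<longrightarrow> (T, t) \<in> signed g \<and> t \<le> clock (srv g s))"

text \<open>The FIFO channel ch from s to d, where P is the set of proposals of s, Pd the proposals
  of s recorded by d and F the Confirms forwarded by s. Because s raises its clock to t when it
  forwards Confirm(T, t), its proposals with timestamp below t were sent to d earlier.\<close>
definition fifo_ok :: "'tx msg list \<Rightarrow> ('tx \<times> nat) set \<Rightarrow> ('tx \<times> nat) set \<Rightarrow> ('tx \<times> nat) set \<Rightarrow> bool" where
  "fifo_ok ch P Pd F \<longleftrightarrow>
     (\<forall>T k. (T, k) \<in> P \<longrightarrow> (T, k) \<in> Pd \<or> Proposed T k \<in> set ch) \<and>
     (\<forall>i T t. i < length ch \<longrightarrow> ch ! i = Confirm T t \<longrightarrow> (T, t) \<in> F \<and>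
        (\<forall>T' k. (T', k) \<in> P \<longrightarrow> k < t \<longrightarrow> (T', k) \<in> Pd \<or> Proposed T' k \<in> set (take i ch)))"

definition channel_inv :: "'s set \<Rightarrow> ('s, 'tx) gstate \<Rightarrow> bool" where
  "channel_inv Byz g \<longleftrightarrow> (\<forall>s d. s \<notin> Byz \<longrightarrow> d \<notin> Byz \<longrightarrow>
     fifo_ok (chan g (Srv s) (Srv d)) (proposed (srv g s) s) (proposed (srv g d) s) (forwarded (srv g s)))"

definition witness_inv :: "'s set \<Rightarrow> ('s, 'tx) gstate \<Rightarrow> bool" where
  "witness_inv Byz g \<longleftrightarrow> (\<forall>s a T. s \<notin> Byz \<longrightarrow> a \<notin> Byz \<longrightarrow> s \<in> ConfirmWitness (srv g a) T \<longrightarrow>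
     (\<exists>t. (T, t) \<in> forwarded (srv g s) \<and>
        (\<forall>T' k. (T', k) \<in> proposed (srv g s) s \<longrightarrow> k < t \<longrightarrow> (T', k) \<in> proposed (srv g a) s)))"

definition pending_inv :: "nat \<Rightarrow> 's::finite set \<Rightarrow> ('s, 'tx) gstate \<Rightarrow> bool" where
  "pending_inv f Byz g \<longleftrightarrow> (\<forall>a t. a \<notin> Byz \<longrightarrow> pending (srv g a) t \<noteq> {} \<longrightarrow>
     (\<exists>W. card (UNIV :: 's set) - f \<le> card W \<and> (\<forall>s\<in>W. s \<notin> Byz \<longrightarrow>
        (\<exists>T. (T, t) \<in> forwarded (srv g s)) \<and>
        (\<forall>T' k. (T', k) \<in> proposed (srv g s) s \<longrightarrow> k < t \<longrightarrow> T' \<in> pending (srv g a) t))))"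

definition signed_before :: "('s, 'tx::linorder) gstate \<Rightarrow> 'tx \<Rightarrow> 'tx \<Rightarrow> bool" where
  "signed_before g T1 T2 \<longleftrightarrow>
     (\<exists>t1 t2. (T1, t1) \<in> signed g \<and> (T2, t2) \<in> signed g \<and> (t1, T1) < (t2, T2))"

text \<open>Whatever timestamp T2 is eventually signed with exceeds that of T1, although T2 need
  not be signed yet.\<close>
definition proposed_after :: "nat \<Rightarrow> 's::finite set \<Rightarrow> ('s, 'tx) gstate \<Rightarrow> 'tx \<Rightarrow> 'tx \<Rightarrow> bool" where
  "proposed_after f Byz g T1 T2 \<longleftrightarrow> (\<exists>t1 W. (T1, t1) \<in> signed g \<and> card (UNIV :: 's set) - f \<le> card W \<and>
     (\<forall>s\<in>W. s \<notin> Byz \<longrightarrow> t1 \<le> clock (srv g s) \<and> (\<forall>k. (T2, k) \<in> proposed (srv g s) s \<longrightarrow> t1 \<le> k)))"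

definition conflicts_settled :: "nat \<Rightarrow> 's::finite set \<Rightarrow> ('tx::linorder \<Rightarrow> 'k set) \<Rightarrow> ('tx \<Rightarrow> 'k set)
    \<Rightarrow> ('s, 'tx) gstate \<Rightarrow> 's \<Rightarrow> ('tx \<times> bool) list \<Rightarrow> 'tx \<Rightarrow> bool" where
  "conflicts_settled f Byz rs ws g a L T \<longleftrightarrow> (\<forall>T'. conflict rs ws T T' \<longrightarrow>
     T' \<in> fst ` set L \<or> T' \<in> cancelled (srv g a) \<or> signed_before g T T' \<or> proposed_after f Byz g T T')"

definition log_inv :: "nat \<Rightarrow> 's::finite set \<Rightarrow> ('tx::linorder \<Rightarrow> 'k set) \<Rightarrow> ('tx \<Rightarrow> 'k set)
    \<Rightarrow> ('s, 'tx) gstate \<Rightarrow> bool" where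
  "log_inv f Byz rs ws g \<longleftrightarrow> (\<forall>a. a \<notin> Byz \<longrightarrow>
     distinct (map fst (log (srv g a))) \<and>
     (\<forall>T. (T, True) \<in> set (log (srv g a)) \<longrightarrow> (\<exists>t. T \<in> confirmed (srv g a) t)) \<and>
     (\<forall>i T. i < length (log (srv g a)) \<longrightarrow> log (srv g a) ! i = (T, True) \<longrightarrow>
        conflicts_settled f Byz rs ws g a (take i (log (srv g a))) T))"

definition byblos_inv :: "nat \<Rightarrow> 's::finite set \<Rightarrow> ('tx::linorder \<Rightarrow> 'k set) \<Rightarrow> ('tx \<Rightarrow> 'k set)
    \<Rightarrow> ('s, 'tx) gstate \<Rightarrow> bool" where
  "byblos_inv f Byz rs ws g \<longleftrightarrow> client_inv f Byz g \<and> confirm_inv Byz g \<and> channel_inv Byz g \<and>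
     witness_inv Byz g \<and> pending_inv f Byz g \<and> log_inv f Byz rs ws g"

section \<open>Agreement on the order of conflicting transactions\<close>

lemma conflict_sym: "conflict rs ws T1 T2 \<Longrightarrow> conflict rs ws T2 T1"
  unfolding conflict_def by blast

lemma client_inv_signed_unique:
  "client_inv f Byz g \<Longrightarrow> (T, t) \<in> signed g \<Longrightarrow> (T, t') \<in> signed g \<Longrightarrow> t = t'"
  unfolding client_inv_def by blast

lemma client_invD:
  fixes g :: "('s::finite, 'tx) gstate"
  assumes "client_inv f Byz g"
  shows "\<And>T t. (T, t) \<in> signed g \<Longrightarrow> cli g T = CDone \<or> cli g T = CCrashed"
    and "\<And>T t. (T, t) \<in> signed g \<Longrightarrow> \<exists>acks. card (UNIV :: 's set) - f \<le> card {s. acks s \<noteq> None} \<and>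
        t = client_timestamp f acks \<and> acks_genuine Byz g T acks"
    and "\<And>T acks. cli g T = CWait acks \<Longrightarrow> acks_genuine Byz g T acks"
    and "\<And>s d m. s \<notin> Byz \<Longrightarrow> m \<in> set (chan g (Srv s) d) \<Longrightarrow> proposal_msg_genuine g s m"
  using assms unfolding client_inv_def by blast+

lemma confirm_invD:
  assumes "confirm_inv Byz g"
  shows "\<And>x y T t. Confirm T t \<in> set (chan g x y) \<Longrightarrow> (T, t) \<in> signed g"
    and "\<And>s T t. s \<notin> Byz \<Longrightarrow> T \<in> confirmed (srv g s) t \<Longrightarrow> (T, t) \<in> signed g"
    and "\<And>s T t. s \<notin> Byz \<Longrightarrow> (T, t) \<in> forwarded (srv g s) \<Longrightarrow> (T, t) \<in> signed g"
    and "\<And>s T t. s \<notin> Byz \<Longrightarrow> (T, t) \<in> forwarded (srv g s) \<Longrightarrow> t \<le> clock (srv g s)"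
  using assms unfolding confirm_inv_def by blast+

lemma signed_before_asym:
  assumes "client_inv f Byz g" and "signed_before g T1 T2"
  shows "\<not> signed_before g T2 T1"
proof
  obtain t1 t2 where t: "(T1, t1) \<in> signed g" "(T2, t2) \<in> signed g" "(t1, T1) < (t2, T2)"
    using assms(2) unfolding signed_before_def by blast
  assume "signed_before g T2 T1"
  then obtain u1 u2 where u: "(T1, u1) \<in> signed g" "(T2, u2) \<in> signed g" "(u2, T2) < (u1, T1)"
    unfolding signed_before_def by blast
  have "u1 = t1" "u2 = t2"
    using client_inv_signed_unique[OF assms(1)] t u by blast+
  then show False using t(3) u(3) less_asym' by blast
qed

text \<open>The (f+1)-st largest acknowledged timestamp of T2 comes from a correct server of the
  quorum W, whose proposal of T2 is not below t1.\<close>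
lemma proposed_after_timestamp_less:
  assumes "client_inv f Byz g" and "4 * f < card (UNIV :: 's::finite set)" and "card (Byz :: 's set) \<le> f"
    and "proposed_after f Byz g T1 T2" and "(T1, t1) \<in> signed g" and "(T2, t2) \<in> signed g"
  shows "t1 < t2"
proof -
  obtain t1' W where W: "(T1, t1') \<in> signed g" "card (UNIV :: 's set) - f \<le> card W"
      "\<forall>s\<in>W. s \<notin> Byz \<longrightarrow> (\<forall>k. (T2, k) \<in> proposed (srv g s) s \<longrightarrow> t1' \<le> k)"
    using assms(4) unfolding proposed_after_def by blast
  have "t1' = t1" using client_inv_signed_unique[OF assms(1) W(1) assms(5)] .
  obtain acks where acks: "card (UNIV :: 's set) - f \<le> card {s. acks s \<noteq> None}"
      "t2 = client_timestamp f acks" "acks_genuine Byz g T2 acks"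
    using assms(1,6) unfolding client_inv_def by blast
  let ?v = "\<lambda>s. case acks s of None \<Rightarrow> 0 | Some k \<Rightarrow> k"
  have "W \<inter> {s. acks s \<noteq> None} - Byz \<subseteq> {s. t1 \<le> ?v s}"
  proof
    fix s assume s: "s \<in> W \<inter> {s. acks s \<noteq> None} - Byz"
    then obtain k where "acks s = Some k" by auto
    moreover have "(T2, k) \<in> proposed (srv g s) s"
      using acks(3) s calculation unfolding acks_genuine_def by blast
    ultimately show "s \<in> {s. t1 \<le> ?v s}" using W(3) s \<open>t1' = t1\<close> by auto
  qed
  then have "card (W \<inter> {s. acks s \<noteq> None} - Byz) \<le> card {s. t1 \<le> ?v s}"
    by (rule card_mono[rotated]) simp
  moreover have "card (UNIV :: 's set) - 3 * f \<le> card (W \<inter> {s. acks s \<noteq> None} - Byz)"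
    using quorum_intersection[OF W(2) acks(1) assms(3)] .
  ultimately have "t1 \<le> kth_largest f ?v"
    using assms(2) by (intro kth_largest_ge) linarith
  then show ?thesis using acks(2) unfolding client_timestamp_def by simp
qed

lemma distinct_fst_not_in_take:
  assumes "distinct (map fst L)" and "i < j" and "j < length L"
  shows "fst (L ! j) \<notin> fst ` set (take i L)"
proof
  assume "fst (L ! j) \<in> fst ` set (take i L)"
  then obtain m where "m < i" "fst (L ! m) = fst (L ! j)"
    using assms(2,3) by (auto simp: in_set_conv_nth)
  then show False
    using assms nth_eq_iff_index_eq[OF assms(1), of m j] by simp
qed

lemma applied_before_signed_before:
  assumes inv: "byblos_inv f Byz rs ws g"
    and "4 * f < card (UNIV :: 's::finite set)" and "card (Byz :: 's set) \<le> f"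
    and "a \<notin> Byz" and "conflict rs ws T1 T2" and "T2 \<notin> cancelled (srv g a)"
    and "applied_before (log (srv g a)) T1 T2"
  shows "signed_before g T1 T2"
proof -
  let ?L = "log (srv g a)"
  have ci: "client_inv f Byz g" and cf: "confirm_inv Byz g" and li: "log_inv f Byz rs ws g"
    using inv unfolding byblos_inv_def by simp_all
  obtain i j where ij: "i < j" "j < length ?L" "?L ! i = (T1, True)" "?L ! j = (T2, True)"
    using assms(7) unfolding applied_before_def by blast
  have dist: "distinct (map fst ?L)"
    and conf: "\<And>T. (T, True) \<in> set ?L \<Longrightarrow> \<exists>t. T \<in> confirmed (srv g a) t"
    and settled: "conflicts_settled f Byz rs ws g a (take i ?L) T1"
    using li assms(4) ij unfolding log_inv_def by auto
  have "T2 \<notin> fst ` set (take i ?L)"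
    using distinct_fst_not_in_take[OF dist ij(1,2)] ij(4) by simp
  then have "signed_before g T1 T2 \<or> proposed_after f Byz g T1 T2"
    using settled assms(5,6) unfolding conflicts_settled_def by blast
  moreover
  have "(T1, True) \<in> set ?L" "(T2, True) \<in> set ?L"
    using ij nth_mem[of i ?L] nth_mem[of j ?L] by simp_all
  then obtain t1 t2 where "T1 \<in> confirmed (srv g a) t1" "T2 \<in> confirmed (srv g a) t2"
    using conf by blast
  then have t: "(T1, t1) \<in> signed g" "(T2, t2) \<in> signed g"
    using confirm_invD(2)[OF cf assms(4)] by blast+
  moreover have "t1 < t2" if "proposed_after f Byz g T1 T2"
    using proposed_after_timestamp_less[OF ci assms(2,3) that t] .
  ultimately show ?thesis unfolding signed_before_def by auto
qed

lemma applied_before_total: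
  assumes "applied L T1" and "applied L T2" and "T1 \<noteq> T2"
  shows "applied_before L T1 T2 \<or> applied_before L T2 T1"
proof -
  obtain i j where ij: "i < length L" "L ! i = (T1, True)" "j < length L" "L ! j = (T2, True)"
    using assms(1,2) unfolding applied_def in_set_conv_nth by blast
  then have "i \<noteq> j" using assms(3) by auto
  then have "i < j \<or> j < i" by arith
  then show ?thesis using ij unfolding applied_before_def by blast
qed

section \<open>Monotonicity of the invariants\<close>

definition server_progress :: "'s set \<Rightarrow> ('s, 'tx) gstate \<Rightarrow> ('s, 'tx) gstate \<Rightarrow> bool" where
  "server_progress Byz g g' \<longleftrightarrow> signed g \<subseteq> signed g' \<and> (\<forall>s. s \<notin> Byz \<longrightarrow>
     clock (srv g s) \<le> clock (srv g' s) \<and>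
     (\<forall>x. proposed (srv g s) x \<subseteq> proposed (srv g' s) x) \<and>
     (\<forall>t. confirmed (srv g s) t \<subseteq> confirmed (srv g' s) t) \<and>
     cancelled (srv g s) \<subseteq> cancelled (srv g' s) \<and>
     forwarded (srv g s) \<subseteq> forwarded (srv g' s) \<and>
     (\<forall>t. pending (srv g s) t \<noteq> {} \<longrightarrow> pending (srv g' s) t = pending (srv g s) t) \<and>
     (\<forall>T k. (T, k) \<in> proposed (srv g' s) s \<longrightarrow> (T, k) \<notin> proposed (srv g s) s \<longrightarrow> clock (srv g s) \<le> k))"

lemma server_progressD:
  assumes "server_progress Byz g g'"
  shows "signed g \<subseteq> signed g'"
    and "\<And>s. s \<notin> Byz \<Longrightarrow> clock (srv g s) \<le> clock (srv g' s)"
    and "\<And>s x. s \<notin> Byz \<Longrightarrow> proposed (srv g s) x \<subseteq> proposed (srv g' s) x"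
    and "\<And>s t. s \<notin> Byz \<Longrightarrow> confirmed (srv g s) t \<subseteq> confirmed (srv g' s) t"
    and "\<And>s. s \<notin> Byz \<Longrightarrow> cancelled (srv g s) \<subseteq> cancelled (srv g' s)"
    and "\<And>s. s \<notin> Byz \<Longrightarrow> forwarded (srv g s) \<subseteq> forwarded (srv g' s)"
    and "\<And>s t. s \<notin> Byz \<Longrightarrow> pending (srv g s) t \<noteq> {} \<Longrightarrow> pending (srv g' s) t = pending (srv g s) t"
    and "\<And>s T k. s \<notin> Byz \<Longrightarrow> (T, k) \<in> proposed (srv g' s) s \<Longrightarrow> (T, k) \<notin> proposed (srv g s) s
          \<Longrightarrow> clock (srv g s) \<le> k"
  using assms unfolding server_progress_def by blast+

lemma new_proposal_after_forwarded:
  assumes "server_progress Byz g g'" and "confirm_inv Byz g" and "s \<notin> Byz"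
    and "(T, k) \<in> proposed (srv g' s) s" and "(T', t) \<in> forwarded (srv g s)" and "k < t"
  shows "(T, k) \<in> proposed (srv g s) s"
  using server_progressD(8)[OF assms(1,3,4)] confirm_invD(4)[OF assms(2,3,5)] assms(6) by fastforce

lemma signed_before_progress:
  "server_progress Byz g g' \<Longrightarrow> signed_before g T1 T2 \<Longrightarrow> signed_before g' T1 T2"
  unfolding signed_before_def server_progress_def by blast

lemma proposed_after_progress:
  fixes g :: "('s::finite, 'tx) gstate"
  assumes "server_progress Byz g g'" and "proposed_after f Byz g T1 T2"
  shows "proposed_after f Byz g' T1 T2"
proof -
  obtain t1 W where W: "(T1, t1) \<in> signed g" "card (UNIV :: 's set) - f \<le> card W"
      "\<forall>s\<in>W. s \<notin> Byz \<longrightarrow> t1 \<le> clock (srv g s) \<and> (\<forall>k. (T2, k) \<in> proposed (srv g s) s \<longrightarrow> t1 \<le> k)"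
    using assms(2) unfolding proposed_after_def by blast
  have "t1 \<le> clock (srv g' s) \<and> (\<forall>k. (T2, k) \<in> proposed (srv g' s) s \<longrightarrow> t1 \<le> k)"
    if "s \<in> W" "s \<notin> Byz" for s
    using W(3) that server_progressD(2,8)[OF assms(1) that(2)] by (meson order.trans)
  then show ?thesis
    using W(1,2) server_progressD(1)[OF assms(1)] unfolding proposed_after_def by blast
qed

lemma conflicts_settled_progress:
  assumes "server_progress Byz g g'" and "a \<notin> Byz" and "conflicts_settled f Byz rs ws g a L T"
  shows "conflicts_settled f Byz rs ws g' a L T"
  using assms server_progressD(5)[OF assms(1,2)] signed_before_progress[OF assms(1)]
    proposed_after_progress[OF assms(1)]
  unfolding conflicts_settled_def by blast

definition admissible_log_step :: "nat \<Rightarrow> 's::finite set \<Rightarrow> ('tx::linorder \<Rightarrow> 'k set) \<Rightarrow> ('tx \<Rightarrow> 'k set)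
    \<Rightarrow> ('s, 'tx) gstate \<Rightarrow> 's \<Rightarrow> ('tx \<times> bool) list \<Rightarrow> bool" where
  "admissible_log_step f Byz rs ws g a L \<longleftrightarrow> L = log (srv g a) \<or>
     (\<exists>T b. L = log (srv g a) @ [(T, b)] \<and> T \<notin> fst ` set (log (srv g a)) \<and>
        (b \<longrightarrow> (\<exists>t. T \<in> confirmed (srv g a) t) \<and> conflicts_settled f Byz rs ws g a (log (srv g a)) T))"

lemma log_inv_progress:
  assumes "log_inv f Byz rs ws g" and "server_progress Byz g g'"
    and "\<And>a. a \<notin> Byz \<Longrightarrow> admissible_log_step f Byz rs ws g a (log (srv g' a))"
  shows "log_inv f Byz rs ws g'"
  unfolding log_inv_def
proof (intro allI impI)
  fix a assume a: "a \<notin> Byz"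
  let ?L = "log (srv g a)" and ?L' = "log (srv g' a)"
  have dist: "distinct (map fst ?L)"
    and conf: "\<And>T. (T, True) \<in> set ?L \<Longrightarrow> \<exists>t. T \<in> confirmed (srv g a) t"
    and settled: "\<And>i T. i < length ?L \<Longrightarrow> ?L ! i = (T, True) \<Longrightarrow> conflicts_settled f Byz rs ws g a (take i ?L) T"
    using assms(1) a unfolding log_inv_def by blast+
  note conf' = server_progressD(4)[OF assms(2) a]
  note settled' = conflicts_settled_progress[OF assms(2) a]
  consider (same) "?L' = ?L"
    | (append) T b where "?L' = ?L @ [(T, b)]" "T \<notin> fst ` set ?L"
        "b \<Longrightarrow> (\<exists>t. T \<in> confirmed (srv g a) t) \<and> conflicts_settled f Byz rs ws g a ?L T"
    using assms(3)[OF a] unfolding admissible_log_step_def by blast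
  then show "distinct (map fst ?L') \<and> (\<forall>T. (T, True) \<in> set ?L' \<longrightarrow> (\<exists>t. T \<in> confirmed (srv g' a) t)) \<and>
    (\<forall>i T. i < length ?L' \<longrightarrow> ?L' ! i = (T, True) \<longrightarrow> conflicts_settled f Byz rs ws g' a (take i ?L') T)"
  proof cases
    case same
    have "\<exists>t. T \<in> confirmed (srv g' a) t" if "(T, True) \<in> set ?L'" for T
      using that conf conf' unfolding same by blast
    moreover have "conflicts_settled f Byz rs ws g' a (take i ?L') T"
      if "i < length ?L'" "?L' ! i = (T, True)" for i T
      using that settled settled' unfolding same by blast
    ultimately show ?thesis using dist same by simp
  next
    case (append T b)
    have "conflicts_settled f Byz rs ws g' a (take i ?L') T'" if i: "i < length ?L'" "?L' ! i = (T', True)" for i T'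
    proof (cases "i < length ?L")
      case True
      then show ?thesis using settled[of i T'] settled' i append(1) by (simp add: nth_append)
    next
      case False
      then have "i = length ?L" using i(1) append(1) by simp
      then have "take i ?L' = ?L" "T' = T" "b" using i(2) append(1) by simp_all
      then show ?thesis using append(3) settled'[of f rs ws ?L T] by simp
    qed
    moreover have "\<exists>t. T' \<in> confirmed (srv g' a) t" if "(T', True) \<in> set ?L'" for T'
      using that conf conf' append(1,3) by fastforce
    ultimately show ?thesis using dist append(1,2) by auto
  qed
qed

lemma witness_inv_progress:
  assumes "witness_inv Byz g" and "confirm_inv Byz g" and "server_progress Byz g g'"
    and new: "\<And>a T s. a \<notin> Byz \<Longrightarrow> s \<notin> Byz \<Longrightarrow> s \<in> ConfirmWitness (srv g' a) T
       \<Longrightarrow> s \<notin> ConfirmWitness (srv g a) T \<Longrightarrow> \<exists>t. (T, t) \<in> forwarded (srv g' s) \<and>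
        (\<forall>T' k. (T', k) \<in> proposed (srv g' s) s \<longrightarrow> k < t \<longrightarrow> (T', k) \<in> proposed (srv g' a) s)"
  shows "witness_inv Byz g'"
  unfolding witness_inv_def
proof (intro allI impI)
  fix s a T assume h: "s \<notin> Byz" "a \<notin> Byz" "s \<in> ConfirmWitness (srv g' a) T"
  show "\<exists>t. (T, t) \<in> forwarded (srv g' s) \<and>
      (\<forall>T' k. (T', k) \<in> proposed (srv g' s) s \<longrightarrow> k < t \<longrightarrow> (T', k) \<in> proposed (srv g' a) s)"
  proof (cases "s \<in> ConfirmWitness (srv g a) T")
    case False
    then show ?thesis using new h by blast
  next
    case True
    then obtain t where t: "(T, t) \<in> forwarded (srv g s)"
        "\<forall>T' k. (T', k) \<in> proposed (srv g s) s \<longrightarrow> k < t \<longrightarrow> (T', k) \<in> proposed (srv g a) s"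
      using assms(1) h unfolding witness_inv_def by blast
    then show ?thesis
      using new_proposal_after_forwarded[OF assms(3,2) h(1) _ t(1)]
        server_progressD(3,6)[OF assms(3)] h by blast
  qed
qed

lemma pending_inv_progress:
  assumes "pending_inv f Byz g" and "confirm_inv Byz g" and "server_progress Byz g g'"
    and new: "\<And>a t. a \<notin> Byz \<Longrightarrow> pending (srv g' a) t \<noteq> {} \<Longrightarrow> pending (srv g a) t = {} \<Longrightarrow>
      \<exists>W. card (UNIV :: 's::finite set) - f \<le> card W \<and> (\<forall>s\<in>W. s \<notin> Byz \<longrightarrow>
        (\<exists>T. (T, t) \<in> forwarded (srv g' s)) \<and>
        (\<forall>T' k. (T', k) \<in> proposed (srv g' s) s \<longrightarrow> k < t \<longrightarrow> T' \<in> pending (srv g' a) t))"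
  shows "pending_inv f Byz (g' :: ('s, 'tx) gstate)"
  unfolding pending_inv_def
proof (intro allI impI)
  fix a t assume a: "a \<notin> Byz" "pending (srv g' a) t \<noteq> {}"
  show "\<exists>W. card (UNIV :: 's set) - f \<le> card W \<and> (\<forall>s\<in>W. s \<notin> Byz \<longrightarrow>
      (\<exists>T. (T, t) \<in> forwarded (srv g' s)) \<and>
      (\<forall>T' k. (T', k) \<in> proposed (srv g' s) s \<longrightarrow> k < t \<longrightarrow> T' \<in> pending (srv g' a) t))"
  proof (cases "pending (srv g a) t = {}")
    case True
    then show ?thesis using new a by blast
  next
    case False
    then have same: "pending (srv g' a) t = pending (srv g a) t"
      using server_progressD(7)[OF assms(3) a(1)] by blast
    obtain W where W: "card (UNIV :: 's set) - f \<le> card W" "\<forall>s\<in>W. s \<notin> Byz \<longrightarrow>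
        (\<exists>T. (T, t) \<in> forwarded (srv g s)) \<and>
        (\<forall>T' k. (T', k) \<in> proposed (srv g s) s \<longrightarrow> k < t \<longrightarrow> T' \<in> pending (srv g a) t)"
      using assms(1) a(1) False unfolding pending_inv_def by blast
    have "(\<exists>T. (T, t) \<in> forwarded (srv g' s)) \<and>
        (\<forall>T' k. (T', k) \<in> proposed (srv g' s) s \<longrightarrow> k < t \<longrightarrow> T' \<in> pending (srv g' a) t)"
      if s: "s \<in> W" "s \<notin> Byz" for s
    proof -
      obtain T where T: "(T, t) \<in> forwarded (srv g s)" using W(2) s by blast
      show ?thesis
        using T W(2) s same new_proposal_after_forwarded[OF assms(3,2) s(2) _ T]
          server_progressD(6)[OF assms(3) s(2)] by blast
    qed
    then show ?thesis using W(1) by blast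
  qed
qed

lemma fifo_ok_progress:
  assumes "fifo_ok ch P Pd F"
    and pre: "ch = pre \<or> (\<exists>m. ch = m # pre \<and> (\<forall>T k. m = Proposed T k \<longrightarrow> (T, k) \<in> Pd'))"
    and "P \<subseteq> P'" and "Pd \<subseteq> Pd'" and "F \<subseteq> F'"
    and newP: "\<And>T k. (T, k) \<in> P' - P \<Longrightarrow> (T, k) \<in> Pd' \<or> Proposed T k \<in> set app"
    and newk: "\<And>T k T' t. (T, k) \<in> P' - P \<Longrightarrow> (T', t) \<in> F \<Longrightarrow> t \<le> k"
    and app: "\<And>T t. Confirm T t \<in> set app \<Longrightarrow>
       (T, t) \<in> F' \<and> (\<forall>T' k. (T', k) \<in> P' \<longrightarrow> k < t \<longrightarrow> (T', k) \<in> P)"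
  shows "fifo_ok (pre @ app) P' Pd' F'"
proof -
  have old: "(T, k) \<in> Pd' \<or> Proposed T k \<in> set pre" if "(T, k) \<in> P" for T k
  proof -
    have "(T, k) \<in> Pd \<or> Proposed T k \<in> set ch" using assms(1) that unfolding fifo_ok_def by blast
    then show ?thesis using pre assms(4) by auto
  qed
  have old_confirm: "(T, t) \<in> F' \<and>
      (\<forall>T' k. (T', k) \<in> P' \<longrightarrow> k < t \<longrightarrow> (T', k) \<in> Pd' \<or> Proposed T' k \<in> set (take i pre))"
    if i: "i < length pre" "pre ! i = Confirm T t" for i T t
  proof -
    obtain j where j: "j < length ch" "ch ! j = Confirm T t"
        "\<And>T' k. Proposed T' k \<in> set (take j ch) \<Longrightarrow> (T', k) \<in> Pd' \<or> Proposed T' k \<in> set (take i pre)"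
      using pre
    proof
      assume "ch = pre"
      then show ?thesis using i by (intro that[of i]) auto
    next
      assume "\<exists>m. ch = m # pre \<and> (\<forall>T k. m = Proposed T k \<longrightarrow> (T, k) \<in> Pd')"
      then obtain m where "ch = m # pre" "\<forall>T k. m = Proposed T k \<longrightarrow> (T, k) \<in> Pd'" by blast
      then show ?thesis using i by (intro that[of "Suc i"]) auto
    qed
    have "(T, t) \<in> F" and below: "\<And>T' k. (T', k) \<in> P \<Longrightarrow> k < t \<Longrightarrow> (T', k) \<in> Pd \<or> Proposed T' k \<in> set (take j ch)"
      using assms(1) j(1,2) unfolding fifo_ok_def by blast+
    moreover have "(T', k) \<in> P" if "(T', k) \<in> P'" "k < t" for T' k
      using newk[of T' k T t] that \<open>(T, t) \<in> F\<close> by fastforce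
    ultimately show ?thesis using j(3) assms(4,5) by blast
  qed
  show ?thesis unfolding fifo_ok_def
  proof (rule conjI; intro allI impI)
    fix T k assume "(T, k) \<in> P'"
    then show "(T, k) \<in> Pd' \<or> Proposed T k \<in> set (pre @ app)" using old newP by auto
  next
    fix i T t assume i: "i < length (pre @ app)" "(pre @ app) ! i = Confirm T t"
    show "(T, t) \<in> F' \<and> (\<forall>T' k. (T', k) \<in> P' \<longrightarrow> k < t \<longrightarrow> (T', k) \<in> Pd' \<or> Proposed T' k \<in> set (take i (pre @ app)))"
    proof (cases "i < length pre")
      case True
      then show ?thesis using old_confirm[of i T t] i by (auto simp: nth_append)
    next
      case False
      then have "Confirm T t \<in> set app"
        using i nth_mem[of "i - length pre" app] by (simp add: nth_append)
      moreover have "set pre \<subseteq> set (take i (pre @ app))" using False by auto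
      ultimately show ?thesis using app old by blast
    qed
  qed
qed

lemma channel_inv_server_step:
  assumes "channel_inv Byz g" and "confirm_inv Byz g" and "server_progress Byz g g'"
    and chan: "\<And>s0 d. s0 \<notin> Byz \<Longrightarrow> d \<notin> Byz \<Longrightarrow> \<exists>pre.
        chan g' (Srv s0) (Srv d) = pre @ (if s0 = s then outs (Srv d) else []) \<and>
        (chan g (Srv s0) (Srv d) = pre \<or> (\<exists>m. chan g (Srv s0) (Srv d) = m # pre \<and>
           (\<forall>T k. m = Proposed T k \<longrightarrow> (T, k) \<in> proposed (srv g' d) s0)))"
    and new_proposal: "\<And>s0 d T k. s0 \<notin> Byz \<Longrightarrow> d \<notin> Byz \<Longrightarrow> (T, k) \<in> proposed (srv g' s0) s0 \<Longrightarrow>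
        (T, k) \<notin> proposed (srv g s0) s0 \<Longrightarrow>
        (T, k) \<in> proposed (srv g' d) s0 \<or> (s0 = s \<and> Proposed T k \<in> set (outs (Srv d)))"
    and new_confirm: "\<And>d T t. d \<notin> Byz \<Longrightarrow> Confirm T t \<in> set (outs (Srv d)) \<Longrightarrow>
        (T, t) \<in> forwarded (srv g' s) \<and>
        (\<forall>T' k. (T', k) \<in> proposed (srv g' s) s \<longrightarrow> k < t \<longrightarrow> (T', k) \<in> proposed (srv g s) s)"
  shows "channel_inv Byz g'"
  unfolding channel_inv_def
proof (intro allI impI)
  fix s0 d assume h: "s0 \<notin> Byz" "d \<notin> Byz"
  obtain pre where pre: "chan g' (Srv s0) (Srv d) = pre @ (if s0 = s then outs (Srv d) else [])"
      "chan g (Srv s0) (Srv d) = pre \<or> (\<exists>m. chan g (Srv s0) (Srv d) = m # pre \<and>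
           (\<forall>T k. m = Proposed T k \<longrightarrow> (T, k) \<in> proposed (srv g' d) s0))"
    using chan[OF h] by blast
  have "fifo_ok (pre @ (if s0 = s then outs (Srv d) else [])) (proposed (srv g' s0) s0)
      (proposed (srv g' d) s0) (forwarded (srv g' s0))"
  proof (rule fifo_ok_progress[OF _ pre(2)])
    show "fifo_ok (chan g (Srv s0) (Srv d)) (proposed (srv g s0) s0) (proposed (srv g d) s0) (forwarded (srv g s0))"
      using assms(1) h unfolding channel_inv_def by blast
  next
    fix T k assume "(T, k) \<in> proposed (srv g' s0) s0 - proposed (srv g s0) s0"
    then show "(T, k) \<in> proposed (srv g' d) s0 \<or> Proposed T k \<in> set (if s0 = s then outs (Srv d) else [])"
      using new_proposal[OF h] by auto
  next
    fix T k T' t assume "(T, k) \<in> proposed (srv g' s0) s0 - proposed (srv g s0) s0"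
      "(T', t) \<in> forwarded (srv g s0)"
    then show "t \<le> k" using new_proposal_after_forwarded[OF assms(3,2) h(1)] by force
  next
    fix T t assume "Confirm T t \<in> set (if s0 = s then outs (Srv d) else [])"
    then show "(T, t) \<in> forwarded (srv g' s0) \<and>
        (\<forall>T' k. (T', k) \<in> proposed (srv g' s0) s0 \<longrightarrow> k < t \<longrightarrow> (T', k) \<in> proposed (srv g s0) s0)"
      using new_confirm[OF h(2), of T t] by (simp split: if_splits)
  qed (use server_progressD(3,6)[OF assms(3)] h in auto)
  then show "fifo_ok (chan g' (Srv s0) (Srv d)) (proposed (srv g' s0) s0) (proposed (srv g' d) s0)
      (forwarded (srv g' s0))"
    using pre(1) by simp
qed

lemma acks_genuine_mono:
  assumes "acks_genuine Byz g T acks" and "\<And>s. s \<notin> Byz \<Longrightarrow> proposed (srv g s) s \<subseteq> proposed (srv g' s) s"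
  shows "acks_genuine Byz g' T acks"
  using assms unfolding acks_genuine_def by blast

lemma proposal_msg_genuine_mono:
  assumes "proposal_msg_genuine g s m" and "proposed (srv g s) s \<subseteq> proposed (srv g' s) s"
  shows "proposal_msg_genuine g' s m"
  using assms unfolding proposal_msg_genuine_def by blast

lemma client_inv_server_step:
  assumes inv: "client_inv f Byz g" and "signed g' = signed g" and "cli g' = cli g"
    and own: "\<And>s. s \<notin> Byz \<Longrightarrow> proposed (srv g s) s \<subseteq> proposed (srv g' s) s"
    and msgs: "\<And>s d m. s \<notin> Byz \<Longrightarrow> m \<in> set (chan g' (Srv s) d) \<Longrightarrow>
       m \<in> set (chan g (Srv s) d) \<or> proposal_msg_genuine g' s m"
  shows "client_inv f Byz g'"
proof -
  have "proposal_msg_genuine g' s m" if "s \<notin> Byz" "m \<in> set (chan g' (Srv s) d)" for s d m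
    using msgs[OF that] inv proposal_msg_genuine_mono[OF _ own[OF that(1)]] that(1)
    unfolding client_inv_def by blast
  then show ?thesis
    using inv acks_genuine_mono[OF _ own] unfolding client_inv_def assms(2,3) by (intro conjI) blast+
qed

lemma confirm_inv_step:
  assumes "confirm_inv Byz g" and "signed g \<subseteq> signed g'"
    and "\<And>x y T t. Confirm T t \<in> set (chan g' x y) \<Longrightarrow> Confirm T t \<in> set (chan g x y) \<or> (T, t) \<in> signed g'"
    and "\<And>s T t. s \<notin> Byz \<Longrightarrow> T \<in> confirmed (srv g' s) t \<Longrightarrow>
       T \<in> confirmed (srv g s) t \<or> (T, t) \<in> signed g'"
    and "\<And>s T t. s \<notin> Byz \<Longrightarrow> (T, t) \<in> forwarded (srv g' s) \<Longrightarrow>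
       (T, t) \<in> forwarded (srv g s) \<or> (T, t) \<in> signed g' \<and> t \<le> clock (srv g' s)"
    and "\<And>s. s \<notin> Byz \<Longrightarrow> clock (srv g s) \<le> clock (srv g' s)"
  shows "confirm_inv Byz g'"
proof -
  note old = confirm_invD[OF assms(1)]
  have "(T, t) \<in> signed g'" if "Confirm T t \<in> set (chan g' x y)" for x y T t
    using old(1) assms(2) assms(3)[OF that] by blast
  moreover have "(T, t) \<in> signed g'" if "s \<notin> Byz" "T \<in> confirmed (srv g' s) t" for s T t
    using old(2) assms(2) assms(4)[OF that] that(1) by blast
  moreover have "(T, t) \<in> signed g' \<and> t \<le> clock (srv g' s)"
    if "s \<notin> Byz" "(T, t) \<in> forwarded (srv g' s)" for s T t
    using old(3,4)[OF that(1)] assms(2) assms(5)[OF that] assms(6)[OF that(1)] by force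
  ultimately show ?thesis unfolding confirm_inv_def by blast
qed

section \<open>Client and Byzantine steps\<close>

lemma byblos_inv_same_servers:
  assumes inv: "byblos_inv f Byz rs ws g" and srv: "srv g' = srv g" and "signed g \<subseteq> signed g'"
    and "\<And>s d. s \<notin> Byz \<Longrightarrow> d \<notin> Byz \<Longrightarrow> chan g' (Srv s) (Srv d) = chan g (Srv s) (Srv d)"
    and "client_inv f Byz g'"
    and "\<And>x y T t. Confirm T t \<in> set (chan g' x y) \<Longrightarrow> (T, t) \<in> signed g'"
  shows "byblos_inv f Byz rs ws g'"
proof -
  have progress: "server_progress Byz g g'"
    using assms(3) unfolding server_progress_def srv by simp
  have "confirm_inv Byz g'"
    using inv assms(3,6) unfolding byblos_inv_def confirm_inv_def srv by blast
  moreover have "channel_inv Byz g'" "witness_inv Byz g'" "pending_inv f Byz g'"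
    using inv assms(4) unfolding byblos_inv_def channel_inv_def witness_inv_def pending_inv_def srv
    by simp_all
  moreover have "log_inv f Byz rs ws g'"
    by (rule log_inv_progress[OF _ progress])
      (use inv in \<open>simp_all add: byblos_inv_def admissible_log_step_def srv\<close>)
  ultimately show ?thesis using assms(5) unfolding byblos_inv_def by simp
qed

lemma acks_genuine_same_servers:
  "srv g' = srv g \<Longrightarrow> acks_genuine Byz g' T acks = acks_genuine Byz g T acks"
  unfolding acks_genuine_def by simp

lemma proposal_msg_genuine_same_servers:
  "srv g' = srv g \<Longrightarrow> proposal_msg_genuine g' s m = proposal_msg_genuine g s m"
  unfolding proposal_msg_genuine_def by simp

lemma client_send_server: "client_send g T S m (Srv s) = chan g (Srv s)"
  unfolding client_send_def by simp

lemma client_send_set: "set (client_send g T S m x y) \<subseteq> set (chan g x y) \<union> {m}"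
  unfolding client_send_def by (auto split: node.splits)

lemma byblos_inv_cli_crash:
  assumes "byblos_inv f Byz rs ws g"
  shows "byblos_inv f Byz rs ws (g\<lparr>cli := (cli g)(T := CCrashed)\<rparr>)"
proof (rule byblos_inv_same_servers[OF assms])
  show "client_inv f Byz (g\<lparr>cli := (cli g)(T := CCrashed)\<rparr>)"
    using assms unfolding byblos_inv_def client_inv_def acks_genuine_def proposal_msg_genuine_def
    by auto
qed (use assms in \<open>auto simp: byblos_inv_def confirm_inv_def\<close>)

lemma byblos_inv_cli_propose:
  fixes g :: "('s::finite, 'tx::linorder) gstate"
  assumes inv: "byblos_inv f Byz rs ws g" and idle: "cli g T = CIdle"
  shows "byblos_inv f Byz rs ws (g\<lparr>chan := client_send g T S (Propose T),
           cli := (cli g)(T := (if S = UNIV then CWait (\<lambda>_. None) else CCrashed))\<rparr>)"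
    (is "byblos_inv f Byz rs ws ?g'")
proof -
  have ci: "client_inv f Byz g" and cf: "confirm_inv Byz g" using inv unfolding byblos_inv_def by simp_all
  have unsigned: "(T, t) \<notin> signed g" for t using client_invD(1)[OF ci, of T t] idle by auto
  have "client_inv f Byz ?g'"
    unfolding client_inv_def
  proof (intro conjI allI impI)
    show "t = t'" if "(T1, t) \<in> signed ?g'" "(T1, t') \<in> signed ?g'" for T1 t t'
      using client_inv_signed_unique[OF ci] that by simp
    show "cli ?g' T1 = CDone \<or> cli ?g' T1 = CCrashed" if "(T1, t) \<in> signed ?g'" for T1 t
      using client_invD(1)[OF ci] that unsigned by (cases "T1 = T") auto
    show "\<exists>acks. card (UNIV :: 's set) - f \<le> card {s. acks s \<noteq> None} \<and>
        t = client_timestamp f acks \<and> acks_genuine Byz ?g' T1 acks" if "(T1, t) \<in> signed ?g'" for T1 t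
      using client_invD(2)[OF ci] that acks_genuine_same_servers[of ?g' g] by simp
    show "acks_genuine Byz ?g' T1 acks" if "cli ?g' T1 = CWait acks" for T1 acks
      using client_invD(3)[OF ci, of T1 acks] that acks_genuine_same_servers[of ?g' g]
      by (cases "T1 = T") (auto simp: acks_genuine_def split: if_splits)
    show "proposal_msg_genuine ?g' s m" if "s \<notin> Byz" "m \<in> set (chan ?g' (Srv s) d)" for s d m
      using client_invD(4)[OF ci] that proposal_msg_genuine_same_servers[of ?g' g]
      by (simp add: client_send_server)
  qed
  moreover have "(T', t) \<in> signed ?g'" if "Confirm T' t \<in> set (chan ?g' x y)" for x y T' t
    using that client_send_set[of g T S "Propose T" x y] confirm_invD(1)[OF cf, of T' t x y] by auto
  ultimately show ?thesis
    by (intro byblos_inv_same_servers[OF inv]) (simp_all add: client_send_server)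
qed

lemma byblos_inv_cli_confirm:
  fixes g :: "('s::finite, 'tx::linorder) gstate"
  assumes inv: "byblos_inv f Byz rs ws g" and waiting: "cli g T = CWait acks"
    and quorum: "card (UNIV :: 's set) - f \<le> card {s. acks s \<noteq> None}"
    and th: "th = 1 + kth_largest f (\<lambda>s. case acks s of None \<Rightarrow> 0 | Some k \<Rightarrow> k)"
  shows "byblos_inv f Byz rs ws (g\<lparr>chan := client_send g T S (Confirm T th),
           cli := (cli g)(T := (if S = UNIV then CDone else CCrashed)),
           signed := insert (T, th) (signed g)\<rparr>)"
    (is "byblos_inv f Byz rs ws ?g'")
proof -
  have ci: "client_inv f Byz g" and cf: "confirm_inv Byz g" using inv unfolding byblos_inv_def by simp_all
  have unsigned: "(T, t) \<notin> signed g" for t using client_invD(1)[OF ci, of T t] waiting by auto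
  have "client_inv f Byz ?g'"
    unfolding client_inv_def
  proof (intro conjI allI impI)
    show "t = t'" if "(T1, t) \<in> signed ?g'" "(T1, t') \<in> signed ?g'" for T1 t t'
      using client_inv_signed_unique[OF ci] that unsigned by auto
    show "cli ?g' T1 = CDone \<or> cli ?g' T1 = CCrashed" if "(T1, t) \<in> signed ?g'" for T1 t
      using client_invD(1)[OF ci] that unsigned by (cases "T1 = T") auto
    show "\<exists>acks. card (UNIV :: 's set) - f \<le> card {s. acks s \<noteq> None} \<and>
        t = client_timestamp f acks \<and> acks_genuine Byz ?g' T1 acks" if "(T1, t) \<in> signed ?g'" for T1 t
    proof (cases "(T1, t) = (T, th)")
      case True
      then show ?thesis
        using quorum th client_invD(3)[OF ci waiting] acks_genuine_same_servers[of ?g' g]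
        unfolding client_timestamp_def by auto
    next
      case False
      then show ?thesis
        using client_invD(2)[OF ci, of T1 t] that acks_genuine_same_servers[of ?g' g] by auto
    qed
    show "acks_genuine Byz ?g' T1 acks'" if "cli ?g' T1 = CWait acks'" for T1 acks'
      using client_invD(3)[OF ci, of T1 acks'] that acks_genuine_same_servers[of ?g' g]
      by (cases "T1 = T") (simp_all split: if_splits)
    show "proposal_msg_genuine ?g' s m" if "s \<notin> Byz" "m \<in> set (chan ?g' (Srv s) d)" for s d m
      using client_invD(4)[OF ci] that proposal_msg_genuine_same_servers[of ?g' g]
      by (simp add: client_send_server)
  qed
  moreover have "(T', t) \<in> signed ?g'" if "Confirm T' t \<in> set (chan ?g' x y)" for x y T' t
    using that client_send_set[of g T S "Confirm T th" x y] confirm_invD(1)[OF cf, of T' t x y] by auto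
  ultimately show ?thesis
    by (intro byblos_inv_same_servers[OF inv]) (auto simp: client_send_server)
qed

lemma client_phase_update:
  assumes "ph' = (case (c, m, x) of
      (CWait acks, ProposeAck T' k, Srv s) \<Rightarrow>
        if T' = T \<and> acks s = None then CWait (acks(s := Some k)) else CWait acks
    | (ph, _, _) \<Rightarrow> ph)"
  shows "(\<And>acks. c \<noteq> CWait acks) \<Longrightarrow> ph' = c"
    and "ph' = CWait acks' \<Longrightarrow> \<exists>acks. c = CWait acks \<and>
           (acks' = acks \<or> (\<exists>s k. m = ProposeAck T k \<and> x = Srv s \<and> acks' = acks(s := Some k)))"
  using assms by (auto split: cphase.splits msg.splits node.splits if_splits)

lemma byblos_inv_cli_recv:
  fixes g :: "('s::finite, 'tx::linorder) gstate"
  assumes inv: "byblos_inv f Byz rs ws g" and head: "chan g x (Cli T) = m # rest"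
    and ph': "ph' = (case (cli g T, m, x) of
        (CWait acks, ProposeAck T' k, Srv s) \<Rightarrow>
          if T' = T \<and> acks s = None then CWait (acks(s := Some k)) else CWait acks
      | (ph, _, _) \<Rightarrow> ph)"
  shows "byblos_inv f Byz rs ws (g\<lparr>chan := (chan g)(x := (chan g x)(Cli T := rest)),
           cli := (cli g)(T := ph')\<rparr>)"
    (is "byblos_inv f Byz rs ws ?g'")
proof -
  have ci: "client_inv f Byz g" and cf: "confirm_inv Byz g" using inv unfolding byblos_inv_def by simp_all
  have fewer: "set (chan ?g' y z) \<subseteq> set (chan g y z)" for y z
    using head by auto
  have "acks_genuine Byz g T1 acks'" if wait: "cli ?g' T1 = CWait acks'" for T1 acks'
  proof (cases "T1 = T")
    case False
    then show ?thesis using client_invD(3)[OF ci, of T1 acks'] wait by simp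
  next
    case True
    then obtain acks where acks: "cli g T = CWait acks"
        "acks' = acks \<or> (\<exists>s k. m = ProposeAck T k \<and> x = Srv s \<and> acks' = acks(s := Some k))"
      using client_phase_update(2)[OF ph'] wait by auto
    have "acks_genuine Byz g T acks" using client_invD(3)[OF ci acks(1)] .
    moreover have "(T, k) \<in> proposed (srv g s) s" if "s \<notin> Byz" "m = ProposeAck T k" "x = Srv s" for s k
      using client_invD(4)[OF ci, of s m "Cli T"] head that unfolding proposal_msg_genuine_def by simp
    ultimately show ?thesis using acks(2) True unfolding acks_genuine_def by (auto split: if_splits)
  qed
  then have "client_inv f Byz ?g'"
    unfolding client_inv_def
  proof (intro conjI allI impI)
    show "t = t'" if "(T1, t) \<in> signed ?g'" "(T1, t') \<in> signed ?g'" for T1 t t'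
      using client_inv_signed_unique[OF ci] that by simp
    show "cli ?g' T1 = CDone \<or> cli ?g' T1 = CCrashed" if "(T1, t) \<in> signed ?g'" for T1 t
      using client_invD(1)[OF ci, of T1 t] client_phase_update(1)[OF ph'] that by auto
    show "\<exists>acks. card (UNIV :: 's set) - f \<le> card {s. acks s \<noteq> None} \<and>
        t = client_timestamp f acks \<and> acks_genuine Byz ?g' T1 acks" if "(T1, t) \<in> signed ?g'" for T1 t
      using client_invD(2)[OF ci, of T1 t] that acks_genuine_same_servers[of ?g' g] by simp
    show "proposal_msg_genuine ?g' s m'" if "s \<notin> Byz" "m' \<in> set (chan ?g' (Srv s) d)" for s d m'
      using client_invD(4)[OF ci] that fewer proposal_msg_genuine_same_servers[of ?g' g, simplified]
      by blast
  qed (use acks_genuine_same_servers[of ?g' g] in simp)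
  moreover have "(T', t) \<in> signed ?g'" if "Confirm T' t \<in> set (chan ?g' y z)" for y z T' t
    using confirm_invD(1)[OF cf] fewer[of y z] that by force
  ultimately show ?thesis
    by (intro byblos_inv_same_servers[OF inv]) auto
qed

lemma byblos_inv_byz:
  assumes inv: "byblos_inv f Byz rs ws g" and "b \<in> Byz"
    and "\<forall>T t. m = Confirm T t \<longrightarrow> (T, t) \<in> signed g"
  shows "byblos_inv f Byz rs ws (g\<lparr>chan := (chan g)(Srv b := (chan g (Srv b))(y := chan g (Srv b) y @ [m]))\<rparr>)"
    (is "byblos_inv f Byz rs ws ?g'")
proof -
  have ci: "client_inv f Byz g" and cf: "confirm_inv Byz g" using inv unfolding byblos_inv_def by simp_all
  have correct: "chan ?g' (Srv s) = chan g (Srv s)" if "s \<notin> Byz" for s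
    using that assms(2) by auto
  have "client_inv f Byz ?g'"
    using ci correct acks_genuine_same_servers[of ?g' g] proposal_msg_genuine_same_servers[of ?g' g]
    unfolding client_inv_def by simp
  moreover have "(T', t) \<in> signed ?g'" if "Confirm T' t \<in> set (chan ?g' x z)" for x z T' t
    using that assms(3) confirm_invD(1)[OF cf] by (auto split: if_splits)
  ultimately show ?thesis
    by (intro byblos_inv_same_servers[OF inv]) (auto simp: correct assms(2))
qed

section \<open>Server steps\<close>

lemma byblos_inv_quiet_step:
  fixes g :: "('s::finite, 'tx::linorder) gstate"
  assumes inv: "byblos_inv f Byz rs ws g" and s: "s \<notin> Byz"
    and "signed g' = signed g" and "cli g' = cli g" and srv: "srv g' = (srv g)(s := st')"
    and chan: "\<And>y z. \<exists>pre. chan g' y z = pre @ (if y = Srv s then outs z else []) \<and>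
       (chan g y z = pre \<or> (\<exists>m. chan g y z = m # pre \<and> (\<forall>s0 T k. y = Srv s0 \<longrightarrow> m \<noteq> Proposed T k)))"
    and outs: "\<And>z m. m \<in> set (outs z) \<Longrightarrow> \<exists>T c. m = StartResolution T c"
    and same: "proposed st' = proposed (srv g s)" "clock st' = clock (srv g s)"
      "confirmed st' = confirmed (srv g s)" "forwarded st' = forwarded (srv g s)"
      "ConfirmWitness st' = ConfirmWitness (srv g s)" "pending st' = pending (srv g s)"
    and cancelled: "cancelled (srv g s) \<subseteq> cancelled st'"
    and log: "admissible_log_step f Byz rs ws g s (log st')"
  shows "byblos_inv f Byz rs ws g'"
proof -
  have ci: "client_inv f Byz g" and cf: "confirm_inv Byz g" and ch: "channel_inv Byz g"
    and wi: "witness_inv Byz g" and pi: "pending_inv f Byz g" and li: "log_inv f Byz rs ws g"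
    using inv unfolding byblos_inv_def by simp_all
  have proposed: "proposed (srv g' a) = proposed (srv g a)" for a
    using srv same by simp
  have progress: "server_progress Byz g g'"
    using assms(3) cancelled srv same unfolding server_progress_def by auto
  have new_msg: "m \<in> set (chan g y z) \<or> (\<exists>T c. m = StartResolution T c)"
    if "m \<in> set (chan g' y z)" for m y z
    using chan[of y z] that outs[of m z] by (auto split: if_splits)
  have "client_inv f Byz g'"
  proof (rule client_inv_server_step[OF ci assms(3,4)])
    fix s0 d m assume "m \<in> set (chan g' (Srv s0) d)"
    then show "m \<in> set (chan g (Srv s0) d) \<or> proposal_msg_genuine g' s0 m"
      using new_msg unfolding proposal_msg_genuine_def by blast
  qed (simp add: proposed)
  moreover have "confirm_inv Byz g'"
    using new_msg srv same by (intro confirm_inv_step[OF cf]) (auto simp: assms(3) split: if_splits)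
  moreover have "channel_inv Byz g'"
  proof (rule channel_inv_server_step[OF ch cf progress, where s = s and outs = outs])
    fix s0 d
    show "\<exists>pre. chan g' (Srv s0) (Srv d) = pre @ (if s0 = s then outs (Srv d) else []) \<and>
        (chan g (Srv s0) (Srv d) = pre \<or> (\<exists>m. chan g (Srv s0) (Srv d) = m # pre \<and>
           (\<forall>T k. m = Proposed T k \<longrightarrow> (T, k) \<in> proposed (srv g' d) s0)))"
      using chan[of "Srv s0" "Srv d"] by auto
  next
    fix d T t assume "Confirm T t \<in> set (outs (Srv d))"
    then show "(T, t) \<in> forwarded (srv g' s) \<and>
        (\<forall>T' k. (T', k) \<in> proposed (srv g' s) s \<longrightarrow> k < t \<longrightarrow> (T', k) \<in> proposed (srv g s) s)"
      using outs by blast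
  qed (simp add: proposed)
  moreover have "witness_inv Byz g'"
    using srv same by (intro witness_inv_progress[OF wi cf progress]) (simp split: if_splits)
  moreover have "pending_inv f Byz g'"
    using srv same by (intro pending_inv_progress[OF pi cf progress]) (simp split: if_splits)
  moreover have "log_inv f Byz rs ws g'"
    using srv log by (intro log_inv_progress[OF li progress]) (simp add: admissible_log_step_def)
  ultimately show ?thesis unfolding byblos_inv_def by simp
qed

lemma byblos_inv_decide:
  fixes g :: "('s::finite, 'tx::linorder) gstate"
  assumes "byblos_inv f Byz rs ws g" and "s \<notin> Byz"
  shows "byblos_inv f Byz rs ws (g\<lparr>srv := (srv g)(s := (if c = COMMIT
             then (srv g s)\<lparr>committed := insert T (committed (srv g s))\<rparr>
             else (srv g s)\<lparr>cancelled := insert T (cancelled (srv g s))\<rparr>)),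
           decision := (decision g)(T := Some c)\<rparr>)"
  by (rule byblos_inv_quiet_step[OF assms, where outs = "\<lambda>_. []" and st' = "if c = COMMIT
        then (srv g s)\<lparr>committed := insert T (committed (srv g s))\<rparr>
        else (srv g s)\<lparr>cancelled := insert T (cancelled (srv g s))\<rparr>"])
    (auto simp: admissible_log_step_def)

lemma byblos_inv_timer:
  fixes g :: "('s::finite, 'tx::linorder) gstate"
  assumes "byblos_inv f Byz rs ws g" and "s \<notin> Byz"
  shows "byblos_inv f Byz rs ws (g\<lparr>srv := (srv g)(s := (srv g s)\<lparr>timers := timers (srv g s) - {t},
             resolving := resolving (srv g s) \<union> set ts\<rparr>),
           chan := (chan g)(Srv s := (\<lambda>y. chan g (Srv s) y @
             to_servers (map (\<lambda>T. StartResolution T CANCEL) ts) y)),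
           cinput := (\<lambda>T. if T \<in> set ts then insert CANCEL (cinput g T) else cinput g T)\<rparr>)"
  by (rule byblos_inv_quiet_step[OF assms, where outs = "to_servers (map (\<lambda>T. StartResolution T CANCEL) ts)"
        and st' = "(srv g s)\<lparr>timers := timers (srv g s) - {t}, resolving := resolving (srv g s) \<union> set ts\<rparr>"])
    (auto simp: admissible_log_step_def to_servers_def split: node.splits)

lemma byblos_inv_cancel_tx:
  fixes g :: "('s::finite, 'tx::linorder) gstate"
  assumes "byblos_inv f Byz rs ws g" and "s \<notin> Byz" and "T \<notin> fst ` set (log (srv g s))"
  shows "byblos_inv f Byz rs ws (g\<lparr>srv := (srv g)(s := (srv g s)\<lparr>log := log (srv g s) @ [(T, False)]\<rparr>)\<rparr>)"
  by (rule byblos_inv_quiet_step[OF assms(1,2), where outs = "\<lambda>_. []"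
        and st' = "(srv g s)\<lparr>log := log (srv g s) @ [(T, False)]\<rparr>"])
    (use assms(3) in \<open>auto simp: admissible_log_step_def\<close>)

lemma order_before_signed_before:
  assumes "confirm_inv Byz g" and "s \<notin> Byz" and "order_before (srv g s) T T'"
  shows "signed_before g T T'"
proof -
  obtain t t' where "T \<in> confirmed (srv g s) t" "T' \<in> confirmed (srv g s) t'" "(t, T) < (t', T')"
    using assms(3) unfolding order_before_def by auto
  then show ?thesis
    using confirm_invD(2)[OF assms(1,2)] unfolding signed_before_def by blast
qed

text \<open>The quorum behind pending[t] has forwarded Confirms with timestamp t, so their clocks
  have passed t and any proposal of T' they make from now on is at least t.\<close>
lemma not_pending_proposed_after:
  fixes g :: "('s::finite, 'tx) gstate"
  assumes "confirm_inv Byz g" and "pending_inv f Byz g" and "s \<notin> Byz"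
    and "(T, t) \<in> signed g" and "pending (srv g s) t \<noteq> {}" and "T' \<notin> pending (srv g s) t"
  shows "proposed_after f Byz g T T'"
proof -
  obtain W where W: "card (UNIV :: 's set) - f \<le> card W" "\<forall>s0\<in>W. s0 \<notin> Byz \<longrightarrow>
      (\<exists>T0. (T0, t) \<in> forwarded (srv g s0)) \<and>
      (\<forall>T2 k. (T2, k) \<in> proposed (srv g s0) s0 \<longrightarrow> k < t \<longrightarrow> T2 \<in> pending (srv g s) t)"
    using assms(2,3,5) unfolding pending_inv_def by blast
  have "t \<le> clock (srv g s0) \<and> (\<forall>k. (T', k) \<in> proposed (srv g s0) s0 \<longrightarrow> t \<le> k)"
    if "s0 \<in> W" "s0 \<notin> Byz" for s0
    using W(2) that assms(6) confirm_invD(4)[OF assms(1) that(2)] not_le by blast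
  then show ?thesis unfolding proposed_after_def using assms(4) W(1) by blast
qed

lemma apply_rule_conflicts_settled:
  fixes g :: "('s::finite, 'tx::linorder) gstate"
  assumes "confirm_inv Byz g" and "pending_inv f Byz g" and "s \<notin> Byz"
    and "T \<in> confirmed (srv g s) t" and "pending (srv g s) t \<noteq> {}"
    and "\<forall>T' \<in> pending (srv g s) t. \<not> conflict rs ws T T' \<or> T' \<in> cancelled (srv g s)
           \<or> T' \<in> fst ` set (log (srv g s)) \<or> order_before (srv g s) T T'"
  shows "conflicts_settled f Byz rs ws g s (log (srv g s)) T"
  using assms(6) order_before_signed_before[OF assms(1,3)]
    not_pending_proposed_after[OF assms(1-3) confirm_invD(2)[OF assms(1,3,4)] assms(5)]
  unfolding conflicts_settled_def by blast

lemma byblos_inv_apply_tx: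
  fixes g :: "('s::finite, 'tx::linorder) gstate"
  assumes inv: "byblos_inv f Byz rs ws g" and "s \<notin> Byz"
    and "T \<in> confirmed (srv g s) t" and "T \<notin> fst ` set (log (srv g s))" and "pending (srv g s) t \<noteq> {}"
    and "\<forall>T' \<in> pending (srv g s) t. \<not> conflict rs ws T T' \<or> T' \<in> cancelled (srv g s)
           \<or> T' \<in> fst ` set (log (srv g s)) \<or> order_before (srv g s) T T'"
  shows "byblos_inv f Byz rs ws (g\<lparr>srv := (srv g)(s := (srv g s)\<lparr>log := log (srv g s) @ [(T, True)]\<rparr>)\<rparr>)"
proof -
  have "conflicts_settled f Byz rs ws g s (log (srv g s)) T"
    using inv apply_rule_conflicts_settled[OF _ _ assms(2,3,5,6)] unfolding byblos_inv_def by blast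
  then show ?thesis
    by (intro byblos_inv_quiet_step[OF inv assms(2), where outs = "\<lambda>_. []"
          and st' = "(srv g s)\<lparr>log := log (srv g s) @ [(T, True)]\<rparr>"])
      (use assms(3,4) in \<open>auto simp: admissible_log_step_def\<close>)
qed

lemma srv_step_simps:
  "srv (srv_step g s st' outs ins x rest) = (srv g)(s := st')"
  "signed (srv_step g s st' outs ins x rest) = signed g"
  "cli (srv_step g s st' outs ins x rest) = cli g"
  "chan (srv_step g s st' outs ins x rest) y z =
     (if y = x \<and> z = Srv s then rest else chan g y z) @ (if y = Srv s then outs z else [])"
  unfolding srv_step_def Let_def by auto

lemma srv_step_chan:
  assumes "chan g x (Srv s) = m # rest"
  shows "\<exists>pre. chan (srv_step g s st' outs ins x rest) y z = pre @ (if y = Srv s then outs z else []) \<and>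
    (chan g y z = pre \<or> (y = x \<and> z = Srv s \<and> chan g y z = m # pre))"
  using assms by (auto simp: srv_step_simps)

lemma srv_step_chan_set:
  assumes "chan g x (Srv s) = m # rest"
  shows "set (chan (srv_step g s st' outs ins x rest) y z) \<subseteq>
    set (chan g y z) \<union> (if y = Srv s then set (outs z) else {})"
  using assms by (auto simp: srv_step_simps)

lemma byblos_inv_recv_quiet:
  fixes g :: "('s::finite, 'tx::linorder) gstate"
  assumes "byblos_inv f Byz rs ws g" and "s \<notin> Byz" and head: "chan g x (Srv s) = m # rest"
    and "\<And>s0 T k. x = Srv s0 \<Longrightarrow> m \<noteq> Proposed T k"
    and "\<And>z m. m \<in> set (outs z) \<Longrightarrow> \<exists>T c. m = StartResolution T c"
    and "proposed st' = proposed (srv g s)" "clock st' = clock (srv g s)"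
      "confirmed st' = confirmed (srv g s)" "forwarded st' = forwarded (srv g s)"
      "ConfirmWitness st' = ConfirmWitness (srv g s)" "pending st' = pending (srv g s)"
      "cancelled (srv g s) \<subseteq> cancelled st'" "log st' = log (srv g s)"
  shows "byblos_inv f Byz rs ws (srv_step g s st' outs ins x rest)"
proof (rule byblos_inv_quiet_step[OF assms(1,2) _ _ _ _ assms(5-12)])
  show "\<exists>pre. chan (srv_step g s st' outs ins x rest) y z = pre @ (if y = Srv s then outs z else []) \<and>
      (chan g y z = pre \<or> (\<exists>m. chan g y z = m # pre \<and> (\<forall>s0 T k. y = Srv s0 \<longrightarrow> m \<noteq> Proposed T k)))" for y z
    using srv_step_chan[OF head, of st' outs ins y z] assms(4) by blast
qed (simp_all add: srv_step_simps admissible_log_step_def assms(13))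

lemma byblos_inv_on_propose:
  fixes g :: "('s::finite, 'tx::linorder) gstate"
  assumes inv: "byblos_inv f Byz rs ws g" and s: "s \<notin> Byz" and head: "chan g (Cli T0) (Srv s) = m # rest"
    and handler: "on_propose s (Cli T0) T (srv g s) = (st', outs, ins)"
  shows "byblos_inv f Byz rs ws (srv_step g s st' outs ins (Cli T0) rest)"
    (is "byblos_inv f Byz rs ws ?g'")
proof -
  have ci: "client_inv f Byz g" and cf: "confirm_inv Byz g" and ch: "channel_inv Byz g"
    and wi: "witness_inv Byz g" and pi: "pending_inv f Byz g" and li: "log_inv f Byz rs ws g"
    using inv unfolding byblos_inv_def by simp_all
  define c where "c = clock (srv g s)"
  have st': "st' = (srv g s)\<lparr>proposed := (proposed (srv g s))(s := insert (T, c) (proposed (srv g s) s))\<rparr>"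
    and outs: "outs = (\<lambda>d. if d = Cli T0 then [ProposeAck T c]
                          else case d of Srv _ \<Rightarrow> [Proposed T c] | Cli _ \<Rightarrow> [])"
    using handler unfolding on_propose_def c_def by auto
  have srv: "srv ?g' = (srv g)(s := st')" by (simp add: srv_step_simps)
  have proposed: "proposed (srv ?g' a) b =
      (if a = s \<and> b = s then insert (T, c) (proposed (srv g s) s) else proposed (srv g a) b)" for a b
    using srv st' by auto
  have unchanged: "clock (srv ?g' a) = clock (srv g a)" "confirmed (srv ?g' a) = confirmed (srv g a)"
    "forwarded (srv ?g' a) = forwarded (srv g a)" "ConfirmWitness (srv ?g' a) = ConfirmWitness (srv g a)"
    "pending (srv ?g' a) = pending (srv g a)" "cancelled (srv ?g' a) = cancelled (srv g a)"
    "log (srv ?g' a) = log (srv g a)" for a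
    using srv st' by auto
  note chan_set = srv_step_chan_set[OF head, of st' outs ins]
  have progress: "server_progress Byz g ?g'"
    unfolding server_progress_def using proposed unchanged c_def by (auto simp: srv_step_simps)
  have "client_inv f Byz ?g'"
  proof (rule client_inv_server_step[OF ci])
    fix s0 d m' assume "m' \<in> set (chan ?g' (Srv s0) d)"
    then show "m' \<in> set (chan g (Srv s0) d) \<or> proposal_msg_genuine ?g' s0 m'"
      using chan_set[of "Srv s0" d] proposed unfolding proposal_msg_genuine_def outs
      by (auto split: if_splits node.splits)
  qed (auto simp: srv_step_simps st')
  moreover have "confirm_inv Byz ?g'"
    using chan_set unchanged unfolding outs
    by (intro confirm_inv_step[OF cf]) (fastforce simp: srv_step_simps split: if_splits node.splits)+
  moreover have "channel_inv Byz ?g'"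
  proof (rule channel_inv_server_step[OF ch cf progress, where s = s and outs = outs])
    fix s0 d
    show "\<exists>pre. chan ?g' (Srv s0) (Srv d) = pre @ (if s0 = s then outs (Srv d) else []) \<and>
        (chan g (Srv s0) (Srv d) = pre \<or> (\<exists>m. chan g (Srv s0) (Srv d) = m # pre \<and>
           (\<forall>T k. m = Proposed T k \<longrightarrow> (T, k) \<in> proposed (srv ?g' d) s0)))"
      using srv_step_chan[OF head, of st' outs ins "Srv s0" "Srv d"] by auto
  next
    fix s0 d T' k assume "(T', k) \<in> proposed (srv ?g' s0) s0" "(T', k) \<notin> proposed (srv g s0) s0"
    then show "(T', k) \<in> proposed (srv ?g' d) s0 \<or> (s0 = s \<and> Proposed T' k \<in> set (outs (Srv d)))"
      unfolding proposed by (simp add: outs split: if_splits)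
  next
    fix d T' t assume "Confirm T' t \<in> set (outs (Srv d))"
    then show "(T', t) \<in> forwarded (srv ?g' s) \<and>
        (\<forall>T'' k. (T'', k) \<in> proposed (srv ?g' s) s \<longrightarrow> k < t \<longrightarrow> (T'', k) \<in> proposed (srv g s) s)"
      by (simp add: outs)
  qed
  moreover have "witness_inv Byz ?g'"
    by (rule witness_inv_progress[OF wi cf progress]) (simp add: unchanged)
  moreover have "pending_inv f Byz ?g'"
    by (rule pending_inv_progress[OF pi cf progress]) (simp add: unchanged)
  moreover have "log_inv f Byz rs ws ?g'"
    by (rule log_inv_progress[OF li progress]) (simp add: unchanged admissible_log_step_def)
  ultimately show ?thesis unfolding byblos_inv_def by simp
qed

lemma byblos_inv_on_proposed:
  fixes g :: "('s::finite, 'tx::linorder) gstate"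
  assumes inv: "byblos_inv f Byz rs ws g" and s: "s \<notin> Byz"
    and head: "chan g (Srv s1) (Srv s) = Proposed T k # rest"
    and handler: "on_proposed s1 T k (srv g s) = (st', outs, ins)"
  shows "byblos_inv f Byz rs ws (srv_step g s st' outs ins (Srv s1) rest)"
    (is "byblos_inv f Byz rs ws ?g'")
proof -
  have ci: "client_inv f Byz g" and cf: "confirm_inv Byz g" and ch: "channel_inv Byz g"
    and wi: "witness_inv Byz g" and pi: "pending_inv f Byz g" and li: "log_inv f Byz rs ws g"
    using inv unfolding byblos_inv_def by simp_all
  have st': "st' = (srv g s)\<lparr>proposed := (proposed (srv g s))(s1 := insert (T, k) (proposed (srv g s) s1))\<rparr>"
    and outs: "outs z = []" for z
    using handler unfolding on_proposed_def no_out_def by auto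
  have srv: "srv ?g' = (srv g)(s := st')" by (simp add: srv_step_simps)
  have own: "(T, k) \<in> proposed (srv g s) s" if "s1 = s"
    using client_invD(4)[OF ci s, of "Proposed T k" "Srv s"] head that
    unfolding proposal_msg_genuine_def by simp
  have proposed: "proposed (srv ?g' a) b =
      (if a = s \<and> b = s1 then insert (T, k) (proposed (srv g a) b) else proposed (srv g a) b)" for a b
    using srv st' by auto
  have proposed_own: "proposed (srv ?g' a) a = proposed (srv g a) a" for a
    using proposed own by auto
  have unchanged: "clock (srv ?g' a) = clock (srv g a)" "confirmed (srv ?g' a) = confirmed (srv g a)"
    "forwarded (srv ?g' a) = forwarded (srv g a)" "ConfirmWitness (srv ?g' a) = ConfirmWitness (srv g a)"
    "pending (srv ?g' a) = pending (srv g a)" "cancelled (srv ?g' a) = cancelled (srv g a)"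
    "log (srv ?g' a) = log (srv g a)" for a
    using srv st' by auto
  have fewer: "set (chan ?g' y z) \<subseteq> set (chan g y z)" for y z
    using head by (auto simp: srv_step_simps outs)
  have progress: "server_progress Byz g ?g'"
    unfolding server_progress_def using proposed proposed_own unchanged
    by (auto simp: srv_step_simps)
  have same: "signed ?g' = signed g" "cli ?g' = cli g" by (simp_all add: srv_step_simps)
  have "client_inv f Byz ?g'"
    by (rule client_inv_server_step[OF ci same]) (use fewer proposed_own in auto)
  moreover have "confirm_inv Byz ?g'"
    by (rule confirm_inv_step[OF cf]) (use fewer unchanged same in auto)
  moreover have "channel_inv Byz ?g'"
  proof (rule channel_inv_server_step[OF ch cf progress, where s = s and outs = outs])
    fix s0 d
    show "\<exists>pre. chan ?g' (Srv s0) (Srv d) = pre @ (if s0 = s then outs (Srv d) else []) \<and>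
        (chan g (Srv s0) (Srv d) = pre \<or> (\<exists>m. chan g (Srv s0) (Srv d) = m # pre \<and>
           (\<forall>T k. m = Proposed T k \<longrightarrow> (T, k) \<in> proposed (srv ?g' d) s0)))"
      using srv_step_chan[OF head, of st' outs ins "Srv s0" "Srv d"] proposed by auto
  qed (simp_all add: proposed_own outs)
  moreover have "witness_inv Byz ?g'"
    by (rule witness_inv_progress[OF wi cf progress]) (simp add: unchanged)
  moreover have "pending_inv f Byz ?g'"
    by (rule pending_inv_progress[OF pi cf progress]) (simp add: unchanged)
  moreover have "log_inv f Byz rs ws ?g'"
    by (rule log_inv_progress[OF li progress]) (simp add: unchanged admissible_log_step_def)
  ultimately show ?thesis unfolding byblos_inv_def by simp
qed

lemma on_confirm_state:
  "proposed (fst (on_confirm q x T t st)) = proposed st"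
  "clock (fst (on_confirm q x T t st)) = max (clock st) t"
  "confirmed (fst (on_confirm q x T t st)) = (confirmed st)(t := insert T (confirmed st t))"
  "forwarded (fst (on_confirm q x T t st)) = insert (T, t) (forwarded st)"
  "cancelled (fst (on_confirm q x T t st)) = cancelled st"
  "log (fst (on_confirm q x T t st)) = log st"
  "ConfirmWitness (fst (on_confirm q x T t st)) = (case x of
      Srv s' \<Rightarrow> (ConfirmWitness st)(T := insert s' (ConfirmWitness st T)) | Cli _ \<Rightarrow> ConfirmWitness st)"
  unfolding on_confirm_def Let_def by (simp_all split: node.splits)

lemma on_confirm_pending:
  "pending st t' \<noteq> {} \<or> t' \<noteq> t \<Longrightarrow> pending (fst (on_confirm q x T t st)) t' = pending st t'"
  "pending (fst (on_confirm q x T t st)) t \<noteq> pending st t \<Longrightarrow>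
     pending (fst (on_confirm q x T t st)) t =
       {T'. \<exists>s'\<in>ConfirmWitness (fst (on_confirm q x T t st)) T. \<exists>k\<le>t. (T', k) \<in> proposed st s'}
     \<and> card (ConfirmWitness (fst (on_confirm q x T t st)) T) = q"
  unfolding on_confirm_def Let_def by (auto split: node.splits if_splits)

lemma on_confirm_outs:
  "m \<in> set (fst (snd (on_confirm q x T t st)) z) \<Longrightarrow> m = Confirm T t \<or> (\<exists>T' c. m = StartResolution T' c)"
  unfolding on_confirm_def Let_def by (auto simp: to_servers_def split: node.splits if_splits)

lemma channel_inv_head_confirm:
  assumes "channel_inv Byz g" and "s1 \<notin> Byz" and "s \<notin> Byz"
    and "chan g (Srv s1) (Srv s) = Confirm T t # rest"
  shows "(T, t) \<in> forwarded (srv g s1) \<and>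
    (\<forall>T' k. (T', k) \<in> proposed (srv g s1) s1 \<longrightarrow> k < t \<longrightarrow> (T', k) \<in> proposed (srv g s) s1)"
proof -
  have "fifo_ok (chan g (Srv s1) (Srv s)) (proposed (srv g s1) s1) (proposed (srv g s) s1) (forwarded (srv g s1))"
    using assms(1-3) unfolding channel_inv_def by blast
  from conjunct2[OF this[unfolded fifo_ok_def], rule_format, of 0 T t]
  show ?thesis using assms(4) by simp
qed

lemma witness_quorum_pending:
  fixes g :: "('s::finite, 'tx) gstate"
  assumes "client_inv f Byz g" and "confirm_inv Byz g" and "witness_inv Byz g" and "a \<notin> Byz"
    and "(T, t) \<in> signed g"
    and "pending (srv g a) t = {T'. \<exists>s'\<in>ConfirmWitness (srv g a) T. \<exists>k\<le>t. (T', k) \<in> proposed (srv g a) s'}"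
    and "card (ConfirmWitness (srv g a) T) = q"
  shows "\<exists>W. q \<le> card W \<and> (\<forall>s\<in>W. s \<notin> Byz \<longrightarrow> (\<exists>T. (T, t) \<in> forwarded (srv g s)) \<and>
    (\<forall>T' k. (T', k) \<in> proposed (srv g s) s \<longrightarrow> k < t \<longrightarrow> T' \<in> pending (srv g a) t))"
proof -
  have "(\<exists>T. (T, t) \<in> forwarded (srv g s)) \<and>
      (\<forall>T' k. (T', k) \<in> proposed (srv g s) s \<longrightarrow> k < t \<longrightarrow> T' \<in> pending (srv g a) t)"
    if s: "s \<in> ConfirmWitness (srv g a) T" "s \<notin> Byz" for s
  proof -
    obtain t0 where t0: "(T, t0) \<in> forwarded (srv g s)"
        "\<forall>T' k. (T', k) \<in> proposed (srv g s) s \<longrightarrow> k < t0 \<longrightarrow> (T', k) \<in> proposed (srv g a) s"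
      using assms(3,4) s unfolding witness_inv_def by blast
    have "t0 = t"
      using client_inv_signed_unique[OF assms(1) confirm_invD(3)[OF assms(2) s(2) t0(1)] assms(5)] .
    then show ?thesis using t0 s(1) assms(6) by fastforce
  qed
  then show ?thesis using assms(7) by (intro exI[of _ "ConfirmWitness (srv g a) T"]) simp
qed

lemma byblos_inv_on_confirm:
  fixes g :: "('s::finite, 'tx::linorder) gstate"
  assumes inv: "byblos_inv f Byz rs ws g" and s: "s \<notin> Byz" and head: "chan g x (Srv s) = Confirm T t # rest"
    and handler: "on_confirm (card (UNIV :: 's set) - f) x T t (srv g s) = (st', outs, ins)"
  shows "byblos_inv f Byz rs ws (srv_step g s st' outs ins x rest)"
    (is "byblos_inv f Byz rs ws ?g'")
proof -
  let ?q = "card (UNIV :: 's set) - f"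
  have ci: "client_inv f Byz g" and cf: "confirm_inv Byz g" and ch: "channel_inv Byz g"
    and wi: "witness_inv Byz g" and pi: "pending_inv f Byz g" and li: "log_inv f Byz rs ws g"
    using inv unfolding byblos_inv_def by simp_all
  have st': "st' = fst (on_confirm ?q x T t (srv g s))" and outs': "outs = fst (snd (on_confirm ?q x T t (srv g s)))"
    using handler by simp_all
  note E = on_confirm_state[where q = ?q and x = x and T = T and t = t and st = "srv g s", folded st']
  note P = on_confirm_pending[where q = ?q and x = x and T = T and t = t and st = "srv g s", folded st']
  note outs = on_confirm_outs[where q = ?q and x = x and T = T and t = t and st = "srv g s", folded outs']
  have same: "signed ?g' = signed g" "cli ?g' = cli g" by (simp_all add: srv_step_simps)
  have srv: "srv ?g' = (srv g)(s := st')" by (simp add: srv_step_simps)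
  have proposed: "proposed (srv ?g' a) = proposed (srv g a)" for a
    using srv E by simp
  have signed_T: "(T, t) \<in> signed g"
    using confirm_invD(1)[OF cf, of T t x "Srv s"] head by simp
  note chan_set = srv_step_chan_set[OF head, of st' outs ins]
  have progress: "server_progress Byz g ?g'"
    unfolding server_progress_def using srv E P(1) proposed by (auto simp: same)
  have ci': "client_inv f Byz ?g'"
  proof (rule client_inv_server_step[OF ci same])
    fix s0 d m assume "m \<in> set (chan ?g' (Srv s0) d)"
    then show "m \<in> set (chan g (Srv s0) d) \<or> proposal_msg_genuine ?g' s0 m"
      using chan_set[of "Srv s0" d] outs unfolding proposal_msg_genuine_def by (fastforce split: if_splits)
  qed (simp add: proposed)
  moreover have cf': "confirm_inv Byz ?g'"
  proof (rule confirm_inv_step[OF cf])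
    fix y z T' t' assume "Confirm T' t' \<in> set (chan ?g' y z)"
    then show "Confirm T' t' \<in> set (chan g y z) \<or> (T', t') \<in> signed ?g'"
      using chan_set[of y z] outs signed_T same by (fastforce split: if_splits)
  qed (use srv E signed_T same in \<open>auto split: if_splits\<close>)
  moreover have "channel_inv Byz ?g'"
  proof (rule channel_inv_server_step[OF ch cf progress, where s = s and outs = outs])
    fix s0 d
    show "\<exists>pre. chan ?g' (Srv s0) (Srv d) = pre @ (if s0 = s then outs (Srv d) else []) \<and>
        (chan g (Srv s0) (Srv d) = pre \<or> (\<exists>m. chan g (Srv s0) (Srv d) = m # pre \<and>
           (\<forall>T k. m = Proposed T k \<longrightarrow> (T, k) \<in> proposed (srv ?g' d) s0)))"
      using srv_step_chan[OF head, of st' outs ins "Srv s0" "Srv d"] by auto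
  next
    fix d T' t' assume "Confirm T' t' \<in> set (outs (Srv d))"
    then show "(T', t') \<in> forwarded (srv ?g' s) \<and>
        (\<forall>T'' k. (T'', k) \<in> proposed (srv ?g' s) s \<longrightarrow> k < t' \<longrightarrow> (T'', k) \<in> proposed (srv g s) s)"
      using outs srv E proposed by fastforce
  qed (simp add: proposed)
  moreover have wi': "witness_inv Byz ?g'"
  proof (rule witness_inv_progress[OF wi cf progress])
    fix a T' s1 assume new: "a \<notin> Byz" "s1 \<notin> Byz" "s1 \<in> ConfirmWitness (srv ?g' a) T'"
      "s1 \<notin> ConfirmWitness (srv g a) T'"
    then have "a = s" "T' = T" "x = Srv s1"
      using srv E by (auto split: if_splits node.splits)
    then show "\<exists>t. (T', t) \<in> forwarded (srv ?g' s1) \<and>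
        (\<forall>T'' k. (T'', k) \<in> proposed (srv ?g' s1) s1 \<longrightarrow> k < t \<longrightarrow> (T'', k) \<in> proposed (srv ?g' a) s1)"
      using channel_inv_head_confirm[OF ch new(2) s] head server_progressD(6)[OF progress new(2)]
      unfolding proposed by blast
  qed
  moreover have "pending_inv f Byz ?g'"
  proof (rule pending_inv_progress[OF pi cf progress])
    fix a t' assume new: "a \<notin> Byz" "pending (srv ?g' a) t' \<noteq> {}" "pending (srv g a) t' = {}"
    then have "a = s" "t' = t" using srv P(1) by (auto split: if_splits)
    then have "pending (srv ?g' a) t' =
        {T'. \<exists>s'\<in>ConfirmWitness (srv ?g' a) T. \<exists>k\<le>t'. (T', k) \<in> proposed (srv ?g' a) s'}"
        "card (ConfirmWitness (srv ?g' a) T) = ?q"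
      using P(2) new srv E(1) by auto
    then show "\<exists>W. ?q \<le> card W \<and> (\<forall>s\<in>W. s \<notin> Byz \<longrightarrow> (\<exists>T. (T, t') \<in> forwarded (srv ?g' s)) \<and>
        (\<forall>T' k. (T', k) \<in> proposed (srv ?g' s) s \<longrightarrow> k < t' \<longrightarrow> T' \<in> pending (srv ?g' a) t'))"
      using witness_quorum_pending[OF ci' cf' wi' new(1)] signed_T same \<open>t' = t\<close> by simp
  qed
  moreover have "log_inv f Byz rs ws ?g'"
    by (rule log_inv_progress[OF li progress]) (simp add: srv E admissible_log_step_def)
  ultimately show ?thesis unfolding byblos_inv_def by simp
qed

lemma on_startres_state:
  "proposed (fst (on_startres f s1 T c st)) = proposed st"
  "clock (fst (on_startres f s1 T c st)) = clock st"
  "confirmed (fst (on_startres f s1 T c st)) = confirmed st"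
  "forwarded (fst (on_startres f s1 T c st)) = forwarded st"
  "ConfirmWitness (fst (on_startres f s1 T c st)) = ConfirmWitness st"
  "pending (fst (on_startres f s1 T c st)) = pending st"
  "cancelled (fst (on_startres f s1 T c st)) = cancelled st"
  "log (fst (on_startres f s1 T c st)) = log st"
  unfolding on_startres_def Let_def by (simp_all split: code.splits)

lemma on_startres_outs:
  "m \<in> set (fst (snd (on_startres f s1 T c st)) z) \<Longrightarrow> \<exists>T' c'. m = StartResolution T' c'"
  unfolding on_startres_def Let_def
  by (auto simp: to_servers_def no_out_def split: code.splits if_splits node.splits)

lemma byblos_inv_recv:
  fixes g :: "('s::finite, 'tx::linorder) gstate"
  assumes inv: "byblos_inv f Byz rs ws g" and s: "s \<notin> Byz" and head: "chan g x (Srv s) = m # rest"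
    and handler: "handle f (card (UNIV :: 's set) - f) s x m (srv g s) = (st', outs, ins)"
  shows "byblos_inv f Byz rs ws (srv_step g s st' outs ins x rest)"
proof -
  have ignored: "byblos_inv f Byz rs ws (srv_step g s st' outs ins x rest)"
    if "st' = srv g s" "outs = no_out" "\<And>s0 T k. x = Srv s0 \<Longrightarrow> m \<noteq> Proposed T k"
    by (rule byblos_inv_recv_quiet[OF inv s head]) (use that in \<open>simp_all add: no_out_def\<close>)
  show ?thesis
  proof (cases m)
    case (Propose T)
    then show ?thesis
      using ignored byblos_inv_on_propose[OF inv s] head handler
      by (cases x) (simp_all add: handle_def)
  next
    case (ProposeAck T k)
    then show ?thesis using ignored handler by (simp add: handle_def)
  next
    case (Proposed T k)
    then show ?thesis
      using ignored byblos_inv_on_proposed[OF inv s] head handler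
      by (cases x) (simp_all add: handle_def)
  next
    case (Confirm T t)
    then show ?thesis using byblos_inv_on_confirm[OF inv s] head handler by (simp add: handle_def)
  next
    case (StartResolution T c)
    show ?thesis
    proof (cases x)
      case (Cli T0)
      then show ?thesis using ignored handler StartResolution by (simp add: handle_def)
    next
      case (Srv s1)
      then have "on_startres f s1 T c (srv g s) = (st', outs, ins)"
        using handler StartResolution by (simp add: handle_def)
      then have "st' = fst (on_startres f s1 T c (srv g s))" "outs = fst (snd (on_startres f s1 T c (srv g s)))"
        by simp_all
      then show ?thesis
        using on_startres_outs[of _ f s1 T c "srv g s"] on_startres_state[of f s1 T c "srv g s"] StartResolution
        by (intro byblos_inv_recv_quiet[OF inv s head]) auto
    qed
  qed
qed

lemma byblos_inv_init: "byblos_inv f Byz rs ws ginit"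
  unfolding byblos_inv_def client_inv_def confirm_inv_def channel_inv_def fifo_ok_def witness_inv_def
    pending_inv_def log_inv_def
  by (simp add: ginit_def sinit_def)

lemma byblos_inv_step:
  assumes "step f Byz rs ws g g'" and "byblos_inv f Byz rs ws g"
  shows "byblos_inv f Byz rs ws g'"
  using assms(1)
proof cases
  case (recv s x m rest st' outs ins)
  then show ?thesis using byblos_inv_recv[OF assms(2)] by blast
next
  case (timer s t ts)
  then show ?thesis using byblos_inv_timer[OF assms(2)] by blast
next
  case (decide s T c)
  then show ?thesis using byblos_inv_decide[OF assms(2)] by blast
next
  case (apply_tx s T t)
  then show ?thesis using byblos_inv_apply_tx[OF assms(2)] by blast
next
  case (cancel_tx s T)
  then show ?thesis using byblos_inv_cancel_tx[OF assms(2)] by blast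
next
  case (byz b m y)
  then show ?thesis using byblos_inv_byz[OF assms(2)] by blast
next
  case (cli_propose T S)
  then show ?thesis using byblos_inv_cli_propose[OF assms(2)] by blast
next
  case (cli_recv x T m rest ph')
  then show ?thesis using byblos_inv_cli_recv[OF assms(2)] by blast
next
  case (cli_confirm T acks th S)
  then show ?thesis using byblos_inv_cli_confirm[OF assms(2)] by blast
next
  case (cli_crash T)
  then show ?thesis using byblos_inv_cli_crash[OF assms(2)] by blast
qed

lemma byblos_inv_reach: "g \<in> reach f Byz rs ws \<Longrightarrow> byblos_inv f Byz rs ws g"
  by (induction rule: reach.induct) (auto intro: byblos_inv_init byblos_inv_step)

theorem lemma5:
  fixes f :: nat and Byz :: "'s::finite set"
    and rs ws :: "'tx::linorder \<Rightarrow> 'k set"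
    and g :: "('s, 'tx) gstate" and a b :: 's and T1 T2 :: 'tx
  assumes "card (UNIV :: 's set) = 4 * f + 1"
    and "card Byz \<le> f"
    and "g \<in> reach f Byz rs ws"
    and "a \<notin> Byz" and "b \<notin> Byz"
    and "conflict rs ws T1 T2"
    and "T1 \<notin> cancelled (srv g a)" and "T2 \<notin> cancelled (srv g a)"
    and "T1 \<notin> cancelled (srv g b)" and "T2 \<notin> cancelled (srv g b)"
    and "applied (log (srv g a)) T1" and "applied (log (srv g a)) T2"
    and "applied (log (srv g b)) T1" and "applied (log (srv g b)) T2"
  shows "applied_before (log (srv g a)) T1 T2 \<longleftrightarrow> applied_before (log (srv g b)) T1 T2"
proof -
  have inv: "byblos_inv f Byz rs ws g" using byblos_inv_reach[OF assms(3)] .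
  have n: "4 * f < card (UNIV :: 's set)" using assms(1) by simp
  have distinct: "T1 \<noteq> T2" using assms(6) unfolding conflict_def by simp
  have order: "signed_before g Ti Tj"
    if "c \<notin> Byz" "conflict rs ws Ti Tj" "Tj \<notin> cancelled (srv g c)" "applied_before (log (srv g c)) Ti Tj"
    for c Ti Tj
    using applied_before_signed_before[OF inv n assms(2) that] .
  have asym: "\<not> signed_before g T2 T1" if "signed_before g T1 T2"
    using signed_before_asym[OF _ that] inv unfolding byblos_inv_def by blast
  have "applied_before (log (srv g c)) T1 T2 \<longleftrightarrow> signed_before g T1 T2"
    if "c \<notin> Byz" "T1 \<notin> cancelled (srv g c)" "T2 \<notin> cancelled (srv g c)"
      "applied (log (srv g c)) T1" "applied (log (srv g c)) T2" for c
    using order[OF that(1) assms(6) that(3)] order[OF that(1) conflict_sym[OF assms(6)] that(2)]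
      applied_before_total[OF that(4,5) distinct] asym by blast
  then show ?thesis using assms(4,5,7-14) by blast
qed

end
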